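(* Let $G$ be a finite abelian group, $k\ge1$, $\Gamma=G\wr\mathbb{Z}^k=\Sigma\rtimes_\alpha\mathbb{Z}^k$, and let $\varphi$ be an automorphism of $\Gamma$ of finite order with $R(\varphi)<\infty$. Let $\pi:\Gamma\to\mathbb{Z}^k$ be the natural projection with kernel $\Sigma$ and $\overline{\varphi}$ the automorphism of $\mathbb{Z}^k$ induced by $\varphi$. Then for every $g\in\Gamma$ the Reidemeister class of $g$ with respect to $\varphi$ equals $\pi^{-1}(\{\pi(g)\}_{\overline{\varphi}})$, where $\{z\}_{\overline{\varphi}}$ is the Reidemeister class of $z$ with respect to $\overline{\varphi}$. In particular $R(\varphi)=R(\overline{\varphi})$, and $R(\tau_z\circ\varphi|_\Sigma)=1$ for every $z\in\mathbb{Z}^k$.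
   Context: Reidemeister classes of an endomorphism $\psi$ of a group $H$: classes of $x\sim gx\psi(g^{-1})$, $g\in H$; $R(\psi)$ is their number. $\Sigma=\bigoplus_{x\in\mathbb{Z}^k}G_x$, $G_x\cong G$, $\alpha(x)(g_y)=g_{x+y}$. For $z\in\mathbb{Z}^k$, $\tau_z:\Sigma\to\Sigma$ is conjugation by $z$, i.e. $\tau_z=\alpha(z)$. *)

theory Defs
  imports "HOL-Analysis.Analysis" "HOL-Algebra.Group" "HOL-Library.Extended_Nat"
begin

definition reid_class :: "('a,'b) monoid_scheme \<Rightarrow> ('a \<Rightarrow> 'a) \<Rightarrow> 'a \<Rightarrow> 'a set" where
  "reid_class H psi x = {g \<otimes>\<^bsub>H\<^esub> x \<otimes>\<^bsub>H\<^esub> psi (inv\<^bsub>H\<^esub> g) | g. g \<in> carrier H}"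

definition reid_classes :: "('a,'b) monoid_scheme \<Rightarrow> ('a \<Rightarrow> 'a) \<Rightarrow> 'a set set" where
  "reid_classes H psi = reid_class H psi ` carrier H"

definition reid_number :: "('a,'b) monoid_scheme \<Rightarrow> ('a \<Rightarrow> 'a) \<Rightarrow> enat" where
  "reid_number H psi = (if finite (reid_classes H psi) then enat (card (reid_classes H psi)) else \<infinity>)"

text \<open>The group Z^k, with k = CARD('n).\<close>

definition Zk :: "(int ^ 'n::finite) monoid" where
  "Zk = \<lparr>carrier = UNIV, mult = (+), one = 0\<rparr>"

text \<open>Sigma = direct sum of copies of G indexed by Z^k (finitely supported functions).\<close>

definition lamp_sum :: "('g,'b) monoid_scheme \<Rightarrow> ((int ^ 'n::finite) \<Rightarrow> 'g) monoid" where
  "lamp_sum G = \<lparr>carrier = {s. (\<forall>x. s x \<in> carrier G) \<and> finite {x. s x \<noteq> \<one>\<^bsub>G\<^esub>}},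
                 mult = (\<lambda>s t x. s x \<otimes>\<^bsub>G\<^esub> t x),
                 one = (\<lambda>x. \<one>\<^bsub>G\<^esub>)\<rparr>"

text \<open>alpha(z): (alpha(z) s)(x) = s(x - z), i.e. g_y goes to g_{z+y}.\<close>

definition shift :: "int ^ 'n::finite \<Rightarrow> ((int ^ 'n) \<Rightarrow> 'g) \<Rightarrow> ((int ^ 'n) \<Rightarrow> 'g)" where
  "shift z s = (\<lambda>x. s (x - z))"

definition wreath :: "('g,'b) monoid_scheme \<Rightarrow> (((int ^ 'n::finite) \<Rightarrow> 'g) \<times> (int ^ 'n)) monoid" where
  "wreath G = \<lparr>carrier = carrier (lamp_sum G) \<times> UNIV,
               mult = (\<lambda>(s, z) (t, w). ((\<lambda>x. s x \<otimes>\<^bsub>G\<^esub> shift z t x), z + w)),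
               one = ((\<lambda>x. \<one>\<^bsub>G\<^esub>), 0)\<rparr>"

definition proj :: "(((int ^ 'n::finite) \<Rightarrow> 'g) \<times> (int ^ 'n)) \<Rightarrow> int ^ 'n" where
  "proj g = snd g"

text \<open>Induced automorphism of Z^k: phibar(pi g) = pi(phi g), computed on the section z |-> (1,z).\<close>

definition induced :: "('g,'b) monoid_scheme \<Rightarrow> ((((int ^ 'n::finite) \<Rightarrow> 'g) \<times> (int ^ 'n)) \<Rightarrow> (((int ^ 'n) \<Rightarrow> 'g) \<times> (int ^ 'n)))
     \<Rightarrow> int ^ 'n \<Rightarrow> int ^ 'n" where
  "induced G phi z = proj (phi ((\<lambda>x. \<one>\<^bsub>G\<^esub>), z))"

definition restr_Sigma :: "((((int ^ 'n::finite) \<Rightarrow> 'g) \<times> (int ^ 'n)) \<Rightarrow> (((int ^ 'n) \<Rightarrow> 'g) \<times> (int ^ 'n)))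
     \<Rightarrow> ((int ^ 'n) \<Rightarrow> 'g) \<Rightarrow> ((int ^ 'n) \<Rightarrow> 'g)" where
  "restr_Sigma phi s = fst (phi (s, 0))"

end

theory Submission
  imports Defs "HOL-Algebra.Multiplicative_Group"
begin

text \<open>
  Elements of \<open>\<Sigma>\<close> have finite order and \<open>\<int>\<^sup>k\<close> is torsion free, so \<open>\<phi>\<close> preserves \<open>\<Sigma>\<close>,
  induces \<open>\<phi>\<acute>\<close> on \<open>\<int>\<^sup>k\<close>, and satisfies \<open>\<phi>(\<alpha>(w) s) = \<alpha>(\<phi>\<acute> w) \<phi>(s)\<close> on \<open>\<Sigma>\<close>; the Reidemeister
  classes of \<open>\<phi>\<close> project onto those of \<open>\<phi>\<acute>\<close>.

  If \<open>R(\<phi>) < \<infinity>\<close>, then \<open>\<phi>\<acute>\<close> fixes no nonzero vector: the orbit sum \<open>\<Sum>\<^sub>j \<phi>\<acute>\<^sup>j\<close> is constant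
  on \<open>\<phi>\<acute>\<close>-classes and is multiplication by the order of \<open>\<phi>\<close> on fixed vectors. Moreover no
  \<open>\<psi> = \<tau>\<^sub>z \<circ> \<phi>|\<^sub>\<Sigma>\<close> has a nontrivial fixed point. Indeed, periodizing along \<open>(m\<int>)\<^sup>k\<close> yields finite
  quotients of \<open>\<Sigma>\<close> on which \<open>\<psi>\<close> acts; there the fixed points are as many as the cosets of the image
  of the Lang map \<open>a \<mapsto> a \<psi>(a)\<^sup>-\<^sup>1\<close>, and these cosets inject into the Reidemeister classes of \<open>\<phi>\<close>.
  But from one fixed point, products of its translates along dilated \<open>\<phi>\<acute>\<close>-orbits give arbitrarily
  many fixed points, which stay distinct in a large enough quotient.

  Hence the Lang map of \<open>\<psi>\<close> is injective on \<open>\<Sigma>\<close>, and therefore surjective, since it preserves the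
  finite sets of lamps whose \<open>\<psi>\<close>-iterates are supported in a fixed finite set. Surjectivity gives
  \<open>R(\<psi>) = 1\<close>, and it lets one move freely inside \<open>\<Sigma> \<times> {z}\<close> within a Reidemeister class of \<open>\<phi>\<close>,
  which is therefore the full preimage of a Reidemeister class of \<open>\<phi>\<acute>\<close>.
\<close>

section \<open>Reidemeister classes and the Lang map\<close>

context group
begin

lemma reid_class_self: "group_hom G G f \<Longrightarrow> x \<in> carrier G \<Longrightarrow> x \<in> reid_class G f x"
  unfolding reid_class_def by (rule CollectI, rule exI[of _ \<one>]) (simp add: group_hom.hom_one)

lemma reid_class_subset: "group_hom G G f \<Longrightarrow> x \<in> carrier G \<Longrightarrow> reid_class G f x \<subseteq> carrier G"
  by (auto simp: reid_class_def group_hom.hom_closed)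

lemma reid_class_trans:
  assumes f: "group_hom G G f" and x: "x \<in> carrier G"
    and y: "y \<in> reid_class G f x" and z: "z \<in> reid_class G f y"
  shows "z \<in> reid_class G f x"
proof -
  obtain a where a: "a \<in> carrier G" and y_eq: "y = a \<otimes> x \<otimes> f (inv a)"
    using y by (auto simp: reid_class_def)
  obtain b where b: "b \<in> carrier G" and z_eq: "z = b \<otimes> y \<otimes> f (inv b)"
    using z by (auto simp: reid_class_def)
  have "f (inv (b \<otimes> a)) = f (inv a) \<otimes> f (inv b)"
    using a b by (simp add: inv_mult_group group_hom.hom_mult[OF f])
  then have "z = (b \<otimes> a) \<otimes> x \<otimes> f (inv (b \<otimes> a))"
    using a b x by (simp add: z_eq y_eq group_hom.hom_closed[OF f] m_assoc)
  then show ?thesis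
    using a b unfolding reid_class_def by blast
qed

end

definition lang_map :: "('a, 'b) monoid_scheme \<Rightarrow> ('a \<Rightarrow> 'a) \<Rightarrow> 'a \<Rightarrow> 'a" where
  "lang_map H f a = a \<otimes>\<^bsub>H\<^esub> inv\<^bsub>H\<^esub> f a"

context comm_group
begin

lemma lang_map_hom: assumes f: "group_hom G G f" shows "group_hom G G (lang_map G f)"
proof -
  have closed: "f a \<in> carrier G" if "a \<in> carrier G" for a
    using that by (rule group_hom.hom_closed[OF f])
  have "lang_map G f (a \<otimes> b) = lang_map G f a \<otimes> lang_map G f b"
    if "a \<in> carrier G" "b \<in> carrier G" for a b
    using that closed by (simp add: lang_map_def group_hom.hom_mult[OF f] inv_mult m_ac)
  then show ?thesis
    using closed by (auto simp: group_hom_def group_hom_axioms_def hom_def lang_map_def is_group)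
qed

lemma kernel_lang_map:
  assumes f: "group_hom G G f" shows "kernel G G (lang_map G f) = {a \<in> carrier G. f a = a}"
proof -
  have "a \<otimes> inv b = \<one> \<longleftrightarrow> b = a" if "a \<in> carrier G" "b \<in> carrier G" for a b
    using that inv_equality[of a "inv b"] by auto
  then show ?thesis
    by (auto simp: kernel_def lang_map_def group_hom.hom_closed[OF f])
qed

lemma reid_class_eq_image_lang_map:
  assumes f: "group_hom G G f" and x: "x \<in> carrier G"
  shows "reid_class G f x = (\<lambda>a. x \<otimes> lang_map G f a) ` carrier G"
proof -
  have "g \<otimes> x \<otimes> f (inv g) = x \<otimes> lang_map G f g" if "g \<in> carrier G" for g
    using that x by (simp add: lang_map_def group_hom.hom_inv[OF f] group_hom.hom_closed[OF f] m_ac)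
  then show ?thesis
    by (auto simp: reid_class_def) (metis)
qed

lemma reid_number_eq_1_if_lang_map_surj:
  assumes f: "group_hom G G f" and surj: "lang_map G f ` carrier G = carrier G"
  shows "reid_number G f = 1"
proof -
  have "reid_class G f x = carrier G" if x: "x \<in> carrier G" for x
  proof -
    have "(\<lambda>a. x \<otimes> a) ` carrier G = carrier G"
      using x by (rule surj_const_mult)
    then show ?thesis
      using surj by (simp add: reid_class_eq_image_lang_map[OF f x] image_image[symmetric])
  qed
  then have "reid_classes G f = {carrier G}"
    unfolding reid_classes_def by auto
  then show ?thesis
    by (simp add: reid_number_def one_enat_def)
qed

end

lemma (in group) group_hom_funpow: "group_hom G G f \<Longrightarrow> group_hom G G (f ^^ j)"
proof (induction j)
  case 0
  then show ?case
    by (simp add: group_hom_def group_hom_axioms_def is_group hom_def)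
next
  case (Suc j)
  then show ?case
    by (auto simp: group_hom_def group_hom_axioms_def hom_def Pi_iff)
qed

lemma (in group_hom) card_kernel_mult_card_image:
  assumes fin: "finite (carrier G)"
  shows "card (kernel G H h) * card (h ` carrier G) = order G"
proof -
  let ?I = "H\<lparr>carrier := h ` carrier G\<rparr>"
  have hom_I: "group_hom G ?I h"
    using induced_group_hom[OF G.subgroup_self] by simp
  have "kernel G ?I h = kernel G H h"
    by (simp add: kernel_def)
  then have "G Mod kernel G H h \<cong> ?I"
    using group_hom.FactGroup_iso_set[OF hom_I] by (simp add: is_isoI)
  then have "card (rcosets kernel G H h) = card (h ` carrier G)"
    using iso_same_card by (fastforce simp: FactGroup_def)
  then show ?thesis
    using G.lagrange[OF subgroup_kernel] by (simp add: mult.commute)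
qed

lemma card_le_mult_card_if_fibers_covered:
  assumes "finite A" "finite C" "\<And>a. a \<in> A \<Longrightarrow> f a \<in> C" "finite I"
    and fibers: "\<And>a b. a \<in> A \<Longrightarrow> b \<in> A \<Longrightarrow> f a = f b \<Longrightarrow> b \<in> t a ` I"
  shows "card A \<le> card C * card I"
proof -
  have "A = (\<Union>c \<in> f ` A. {a \<in> A. f a = c})"
    by blast
  then have "card A \<le> (\<Sum>c \<in> f ` A. card {a \<in> A. f a = c})"
    using card_UN_le[OF finite_imageI[OF assms(1)]] by metis
  also have "\<dots> \<le> (\<Sum>c \<in> f ` A. card I)"
  proof (rule sum_mono)
    fix c assume "c \<in> f ` A"
    then obtain a where a: "a \<in> A" "f a = c" by blast
    then have "{b \<in> A. f b = c} \<subseteq> t a ` I"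
      using fibers by blast
    then show "card {b \<in> A. f b = c} \<le> card I"
      using card_mono[OF finite_imageI[OF assms(4)]] card_image_le[OF assms(4)] order_trans by blast
  qed
  also have "\<dots> \<le> card C * card I"
    using assms(2,3) by (simp add: card_mono image_subsetI mult_right_mono)
  finally show ?thesis .
qed

lemma hom_finprod:
  assumes h: "group_hom G H h" and "comm_group G" "comm_group H"
    and A: "finite A" "f \<in> A \<rightarrow> carrier G"
  shows "h (finprod G f A) = finprod H (\<lambda>a. h (f a)) A"
  using A
proof (induction A rule: finite_induct)
  case empty
  then show ?case
    using group_hom.hom_one[OF h] by (simp add: comm_group.axioms(1)[OF assms(2)]
        comm_monoid.finprod_empty comm_group.axioms(1)[OF assms(3)])
next
  case (insert a A)
  interpret G: comm_group G by fact
  interpret H: comm_group H by fact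
  have "h (finprod G f (insert a A)) = h (f a \<otimes>\<^bsub>G\<^esub> finprod G f A)"
    using insert by simp
  also have "\<dots> = h (f a) \<otimes>\<^bsub>H\<^esub> finprod H (\<lambda>a. h (f a)) A"
    using insert by (simp add: group_hom.hom_mult[OF h] G.finprod_closed)
  also have "\<dots> = finprod H (\<lambda>a. h (f a)) (insert a A)"
    using insert group_hom.hom_closed[OF h] by (simp add: Pi_iff)
  finally show ?case .
qed

section \<open>Integer vectors\<close>

definition supnorm :: "int^'n::finite \<Rightarrow> int" where
  "supnorm x = Max (range (\<lambda>i. \<bar>x $ i\<bar>))"

lemma component_le_supnorm: "\<bar>x $ i\<bar> \<le> supnorm x"
  unfolding supnorm_def by (rule Max_ge) auto

lemma supnorm_le: "(\<And>i. \<bar>x $ i\<bar> \<le> b) \<Longrightarrow> supnorm x \<le> b"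
  unfolding supnorm_def by (subst Max_le_iff) auto

lemma supnorm_attained: "\<exists>i. supnorm x = \<bar>x $ i\<bar>"
proof -
  have "Max (range (\<lambda>i. \<bar>x $ i\<bar>)) \<in> range (\<lambda>i. \<bar>x $ i\<bar>)"
    by (rule Max_in) auto
  then show ?thesis
    unfolding supnorm_def by (metis imageE)
qed

lemma supnorm_nonneg: "0 \<le> supnorm x"
  using component_le_supnorm[of x] abs_ge_zero order_trans by blast

lemma supnorm_triangle: "supnorm (x + y) \<le> supnorm x + supnorm y"
proof (rule supnorm_le)
  fix i
  have "\<bar>(x + y) $ i\<bar> \<le> \<bar>x $ i\<bar> + \<bar>y $ i\<bar>"
    by simp
  then show "\<bar>(x + y) $ i\<bar> \<le> supnorm x + supnorm y"
    using component_le_supnorm[of x i] component_le_supnorm[of y i] by simp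
qed

lemma supnorm_minus: "supnorm (- x) = supnorm x"
  unfolding supnorm_def by simp

lemma supnorm_diff_le: "supnorm x - supnorm y \<le> supnorm (x + y)"
  using supnorm_triangle[of "x + y" "- y"] supnorm_minus[of y] by simp

lemma supnorm_smult: "supnorm (of_nat c *s x) = int c * supnorm x"
proof (rule antisym)
  show "supnorm (of_nat c *s x) \<le> int c * supnorm x"
    by (rule supnorm_le) (simp add: abs_mult mult_left_mono component_le_supnorm)
  obtain i where "supnorm x = \<bar>x $ i\<bar>"
    using supnorm_attained by blast
  then show "int c * supnorm x \<le> supnorm (of_nat c *s x)"
    using component_le_supnorm[of "of_nat c *s x" i] by (simp add: abs_mult)
qed

lemma one_le_supnorm: assumes "x \<noteq> 0" shows "1 \<le> supnorm x"
proof -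
  obtain i where "x $ i \<noteq> 0"
    using assms by (auto simp: vec_eq_iff)
  then show ?thesis
    using component_le_supnorm[of x i] by simp
qed

definition mod_vec :: "nat \<Rightarrow> int^'n::finite \<Rightarrow> int^'n" where
  "mod_vec m x = (\<chi> i. x $ i mod int m)"

definition fundamental_box :: "nat \<Rightarrow> (int^'n::finite) set" where
  "fundamental_box m = {x. \<forall>i. 0 \<le> x $ i \<and> x $ i < int m}"

lemma mod_vec_idem [simp]: "mod_vec m (mod_vec m x) = mod_vec m x"
  by (simp add: mod_vec_def)

lemma mod_vec_in_fundamental_box: "0 < m \<Longrightarrow> mod_vec m x \<in> fundamental_box m"
  by (simp add: mod_vec_def fundamental_box_def)

lemma mod_vec_fundamental_box: "x \<in> fundamental_box m \<Longrightarrow> mod_vec m x = x"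
  by (simp add: mod_vec_def fundamental_box_def vec_eq_iff)

lemma mod_vec_add_period: "mod_vec m v = 0 \<Longrightarrow> mod_vec m (y + v) = mod_vec m y"
  by (simp add: mod_vec_def vec_eq_iff mod_add_right_eq[symmetric])

lemma mod_vec_eq_0_iff: "mod_vec m v = 0 \<longleftrightarrow> (\<exists>q. v = of_nat m *s q)"
proof
  assume "mod_vec m v = 0"
  then have "v $ i = int m * (v $ i div int m)" for i
    by (metis (no_types) mod_vec_def mult_div_mod_eq add_0_right vec_lambda_beta zero_index)
  then show "\<exists>q. v = of_nat m *s q"
    by (intro exI[of _ "\<chi> i. v $ i div int m"]) (simp add: vec_eq_iff)
next
  assume "\<exists>q. v = of_nat m *s q"
  then show "mod_vec m v = 0"
    by (auto simp: mod_vec_def vec_eq_iff)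
qed

lemma mod_vec_diff_mod_vec: "mod_vec m (y - mod_vec m y) = 0"
  by (simp add: mod_vec_def vec_eq_iff mod_diff_left_eq[symmetric])

lemma finite_fundamental_box: "finite (fundamental_box m :: (int^'n::finite) set)"
proof -
  have "fundamental_box m \<subseteq> vec_lambda ` {f. \<forall>i. (i \<in> UNIV \<longrightarrow> f i \<in> {0..<int m}) \<and> (i \<notin> UNIV \<longrightarrow> f i = 0)}"
    by (auto simp: fundamental_box_def image_iff intro!: exI[of _ "vec_nth _"])
  moreover have "finite {f. \<forall>i. (i \<in> (UNIV :: 'n set) \<longrightarrow> f i \<in> {0..<int m}) \<and> (i \<notin> UNIV \<longrightarrow> f i = 0)}"
    by (rule finite_set_of_finite_funs) auto
  ultimately show ?thesis
    using finite_subset by blast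
qed

lemma mod_eq_imp_eq_if_small:
  fixes a b :: int
  assumes "a mod int (2 * L + 1) = b mod int (2 * L + 1)" "\<bar>a\<bar> \<le> int L" "\<bar>b\<bar> \<le> int L"
  shows "a = b"
proof (rule ccontr)
  assume "a \<noteq> b"
  have "int (2 * L + 1) dvd (a - b)"
    using assms(1) by (simp add: mod_eq_dvd_iff)
  then have "\<bar>int (2 * L + 1)\<bar> \<le> \<bar>a - b\<bar>"
    using \<open>a \<noteq> b\<close> by (intro dvd_imp_le_int) simp_all
  then show False
    using assms(2,3) by simp
qed

section \<open>The lamplighter group and the wreath product\<close>

definition supp :: "('g,'b) monoid_scheme \<Rightarrow> ('x \<Rightarrow> 'g) \<Rightarrow> 'x set" where
  "supp G s = {x. s x \<noteq> \<one>\<^bsub>G\<^esub>}"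

lemma carrier_lamp_sum: "s \<in> carrier (lamp_sum G) \<longleftrightarrow> (\<forall>x. s x \<in> carrier G) \<and> finite (supp G s)"
  by (simp add: lamp_sum_def supp_def)

lemma mult_lamp_sum [simp]: "s \<otimes>\<^bsub>lamp_sum G\<^esub> t = (\<lambda>x. s x \<otimes>\<^bsub>G\<^esub> t x)"
  by (simp add: lamp_sum_def)

lemma one_lamp_sum [simp]: "\<one>\<^bsub>lamp_sum G\<^esub> = (\<lambda>x. \<one>\<^bsub>G\<^esub>)"
  by (simp add: lamp_sum_def)

lemma carrier_wreath: "carrier (wreath G) = carrier (lamp_sum G) \<times> UNIV"
  by (simp add: wreath_def)

lemma mult_wreath [simp]: "(s, z) \<otimes>\<^bsub>wreath G\<^esub> (t, w) = ((\<lambda>x. s x \<otimes>\<^bsub>G\<^esub> t (x - z)), z + w)"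
  by (simp add: wreath_def shift_def)

lemma one_wreath [simp]: "\<one>\<^bsub>wreath G\<^esub> = ((\<lambda>x. \<one>\<^bsub>G\<^esub>), 0)"
  by (simp add: wreath_def)

lemma shift_apply [simp]: "shift z s x = s (x - z)"
  by (simp add: shift_def)

lemma shift_shift: "shift a (shift b s) = shift (a + b) s"
  by (simp add: shift_def diff_diff_eq add.commute)

lemma supp_shift: "supp G (shift z t) = (\<lambda>y. y + z) ` supp G t"
  by (auto simp: supp_def image_iff) (metis diff_add_cancel)

lemma snd_mult_wreath: "snd (g \<otimes>\<^bsub>wreath G\<^esub> h) = snd g + snd h"
  by (cases g, cases h) simp

lemma carrier_Zk [simp]: "carrier (Zk :: (int^'n::finite) monoid) = UNIV"
  by (simp add: Zk_def)

lemma mult_Zk [simp]: "x \<otimes>\<^bsub>(Zk :: (int^'n::finite) monoid)\<^esub> y = x + y"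
  by (simp add: Zk_def)

lemma one_Zk [simp]: "\<one>\<^bsub>(Zk :: (int^'n::finite) monoid)\<^esub> = 0"
  by (simp add: Zk_def)

lemma Zk_group: "group (Zk :: (int^'n::finite) monoid)"
  by (rule groupI) (auto simp: add.assoc intro: exI[of _ "- _"])

lemma inv_Zk [simp]: "inv\<^bsub>(Zk :: (int^'n::finite) monoid)\<^esub> x = - x"
  by (rule group.inv_equality[OF Zk_group]) simp_all

lemma reid_class_Zk: "reid_class (Zk :: (int^'n::finite) monoid) f x = {w + x + f (- w) | w. True}"
  by (simp add: reid_class_def)

locale lamplighter = comm_group G for G (structure) +
  fixes index_type :: "'n::finite itself"
begin

abbreviation "Lamps \<equiv> (lamp_sum G :: (int^'n \<Rightarrow> _) monoid)"
abbreviation "Wreath \<equiv> (wreath G :: ((int^'n \<Rightarrow> _) \<times> (int^'n)) monoid)"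

lemma supp_mult: "supp G (\<lambda>x. s x \<otimes> t x) \<subseteq> supp G s \<union> supp G t"
  by (auto simp: supp_def)

lemma supp_inv: "\<forall>x. s x \<in> carrier G \<Longrightarrow> supp G (\<lambda>x. inv (s x)) = supp G s"
  by (auto simp: supp_def)

lemma lamp_closed: "s \<in> carrier Lamps \<Longrightarrow> s x \<in> carrier G"
  by (simp add: carrier_lamp_sum)

lemma lamp_finite_supp: "a \<in> carrier Lamps \<Longrightarrow> finite (supp G a)"
  by (simp add: carrier_lamp_sum)

lemma lamp_inv_closed: "s \<in> carrier Lamps \<Longrightarrow> (\<lambda>x. inv (s x)) \<in> carrier Lamps"
  using supp_inv[of s] by (simp add: carrier_lamp_sum)

lemma lamp_mult_closed:
  "s \<in> carrier Lamps \<Longrightarrow> t \<in> carrier Lamps \<Longrightarrow> (\<lambda>x. s x \<otimes> t x) \<in> carrier Lamps"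
  using supp_mult[of s t] by (auto simp: carrier_lamp_sum intro: finite_subset)

lemma lamp_shift_closed: "s \<in> carrier Lamps \<Longrightarrow> shift z s \<in> carrier Lamps"
  using supp_shift[of G z s] by (simp add: carrier_lamp_sum)

lemma lamp_sum_comm_group: "comm_group Lamps"
proof (rule comm_groupI)
  fix s assume s: "s \<in> carrier Lamps"
  then show "\<exists>t\<in>carrier Lamps. t \<otimes>\<^bsub>Lamps\<^esub> s = \<one>\<^bsub>Lamps\<^esub>"
    by (intro bexI[OF _ lamp_inv_closed]) (auto simp: carrier_lamp_sum)
next
  fix s t assume "s \<in> carrier Lamps" "t \<in> carrier Lamps"
  then show "s \<otimes>\<^bsub>Lamps\<^esub> t \<in> carrier Lamps"
    using lamp_mult_closed by simp
next
  fix s t assume "s \<in> carrier Lamps" "t \<in> carrier Lamps"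
  then show "s \<otimes>\<^bsub>Lamps\<^esub> t = t \<otimes>\<^bsub>Lamps\<^esub> s"
    by (auto simp: carrier_lamp_sum m_comm)
qed (auto simp: carrier_lamp_sum supp_def m_assoc)

lemma inv_lamp_sum: "s \<in> carrier Lamps \<Longrightarrow> inv\<^bsub>Lamps\<^esub> s = (\<lambda>x. inv (s x))"
  by (intro group.inv_equality comm_group.axioms(2) lamp_sum_comm_group lamp_inv_closed)
     (auto simp: carrier_lamp_sum)

lemma wreath_mult_closed:
  "(s, z) \<in> carrier Wreath \<Longrightarrow> (t, w) \<in> carrier Wreath \<Longrightarrow>
   ((\<lambda>x. s x \<otimes> t (x - z)), z + w) \<in> carrier Wreath"
  using lamp_mult_closed[OF _ lamp_shift_closed, of s t z] by (simp add: carrier_wreath)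

lemma wreath_inv_closed:
  "(s, z) \<in> carrier Wreath \<Longrightarrow> ((\<lambda>x. inv (s (x + z))), - z) \<in> carrier Wreath"
  using lamp_shift_closed[OF lamp_inv_closed, of s "- z"] by (simp add: carrier_wreath shift_def)

lemma wreath_group: "group Wreath"
proof (rule groupI)
  fix g assume "g \<in> carrier Wreath"
  then show "\<exists>h\<in>carrier Wreath. h \<otimes>\<^bsub>Wreath\<^esub> g = \<one>\<^bsub>Wreath\<^esub>"
    by (cases g) (rule bexI[OF _ wreath_inv_closed], auto simp: carrier_wreath carrier_lamp_sum)
next
  fix g h assume "g \<in> carrier Wreath" "h \<in> carrier Wreath"
  then show "g \<otimes>\<^bsub>Wreath\<^esub> h \<in> carrier Wreath"
    by (cases g, cases h) (simp add: wreath_mult_closed)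
qed (auto simp: carrier_wreath carrier_lamp_sum supp_def m_assoc diff_diff_eq add.assoc)

sublocale Wr: group Wreath
  by (rule wreath_group)

lemma inv_wreath:
  "(s, z) \<in> carrier Wreath \<Longrightarrow> inv\<^bsub>Wreath\<^esub> (s, z) = ((\<lambda>x. inv (s (x + z))), - z)"
  by (intro group.inv_equality wreath_group wreath_inv_closed)
     (auto simp: carrier_wreath carrier_lamp_sum)

lemma snd_inv_wreath: "g \<in> carrier Wreath \<Longrightarrow> snd (inv\<^bsub>Wreath\<^esub> g) = - snd g"
  by (cases g) (simp add: inv_wreath)

lemma unit_in_wreath: "((\<lambda>x. \<one>), z) \<in> carrier Wreath"
  by (simp add: carrier_wreath carrier_lamp_sum supp_def)

lemma pow_wreath_lamp:
  "s \<in> carrier Lamps \<Longrightarrow> (s, 0) [^]\<^bsub>Wreath\<^esub> (k::nat) = ((\<lambda>x. s x [^] k), 0)"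
  by (induction k) (auto simp: carrier_lamp_sum nat_pow_Suc2 m_comm)

lemma snd_pow_wreath: "snd (g [^]\<^bsub>Wreath\<^esub> (k::nat)) = of_nat k *s snd g"
  by (induction k) (simp_all add: snd_mult_wreath vector_sadd_rdistrib)

lemma finite_lamps_supported:
  assumes "finite (carrier G)" "finite S"
  shows "finite {a \<in> carrier Lamps. supp G a \<subseteq> S}"
proof (rule finite_subset)
  show "{a \<in> carrier Lamps. supp G a \<subseteq> S}
        \<subseteq> {f. \<forall>x. (x \<in> S \<longrightarrow> f x \<in> carrier G) \<and> (x \<notin> S \<longrightarrow> f x = \<one>)}"
    by (auto simp: carrier_lamp_sum supp_def)
qed (rule finite_set_of_finite_funs[OF assms(2,1)])

lemma lang_map_funpow:
  assumes psi: "group_hom Lamps Lamps psi" and a: "a \<in> carrier Lamps"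
  shows "(psi ^^ j) (lang_map Lamps psi a) = (\<lambda>x. (psi ^^ j) a x \<otimes> inv ((psi ^^ Suc j) a x))"
proof -
  interpret L: comm_group Lamps by (rule lamp_sum_comm_group)
  have psi_pow: "group_hom Lamps Lamps (psi ^^ j)"
    by (rule L.group_hom_funpow[OF psi])
  have "(psi ^^ j) (lang_map Lamps psi a) = (psi ^^ j) a \<otimes>\<^bsub>Lamps\<^esub> inv\<^bsub>Lamps\<^esub> (psi ^^ j) (psi a)"
    unfolding lang_map_def using a group_hom.hom_closed[OF psi a]
    by (simp add: group_hom.hom_mult[OF psi_pow] group_hom.hom_inv[OF psi_pow] del: mult_lamp_sum)
  then show ?thesis
    using group_hom.hom_closed[OF psi_pow] group_hom.hom_closed[OF psi a]
    by (simp add: inv_lamp_sum funpow_swap1)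
qed

lemma lang_map_iterates_supp:
  assumes psi: "group_hom Lamps Lamps psi" and n: "0 < n"
    and period: "\<And>s. s \<in> carrier Lamps \<Longrightarrow> (psi ^^ n) s = s"
    and a: "a \<in> carrier Lamps" and supp_a: "\<forall>j<n. supp G ((psi ^^ j) a) \<subseteq> S"
  shows "\<forall>j<n. supp G ((psi ^^ j) (lang_map Lamps psi a)) \<subseteq> S"
proof (intro allI impI)
  interpret L: comm_group Lamps by (rule lamp_sum_comm_group)
  have supp_all: "supp G ((psi ^^ j) a) \<subseteq> S" for j
    using supp_a n funpow_mod_eq[OF period[OF a], of j] by (metis mod_less_divisor)
  fix j
  have "supp G (\<lambda>x. inv ((psi ^^ Suc j) a x)) = supp G ((psi ^^ Suc j) a)"
    by (rule supp_inv) (use lamp_closed group_hom.hom_closed[OF L.group_hom_funpow[OF psi] a] in blast)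
  then show "supp G ((psi ^^ j) (lang_map Lamps psi a)) \<subseteq> S"
    using supp_mult[of "(psi ^^ j) a" "\<lambda>x. inv ((psi ^^ Suc j) a x)"] supp_all
    unfolding lang_map_funpow[OF psi a] by blast
qed

lemma lang_map_surj_if_inj:
  assumes fin: "finite (carrier G)" and psi: "group_hom Lamps Lamps psi" and n: "0 < n"
    and period: "\<And>s. s \<in> carrier Lamps \<Longrightarrow> (psi ^^ n) s = s"
    and inj: "inj_on (lang_map Lamps psi) (carrier Lamps)"
  shows "lang_map Lamps psi ` carrier Lamps = carrier Lamps"
proof (intro equalityI subsetI)
  interpret L: comm_group Lamps by (rule lamp_sum_comm_group)
  have lang_hom: "group_hom Lamps Lamps (lang_map Lamps psi)"
    by (rule L.lang_map_hom[OF psi])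
  have closed: "(psi ^^ j) a \<in> carrier Lamps" if "a \<in> carrier Lamps" for a j
    using that by (rule group_hom.hom_closed[OF L.group_hom_funpow[OF psi]])
  fix u assume u: "u \<in> carrier Lamps"
  define S where "S = (\<Union>j<n. supp G ((psi ^^ j) u))"
  define U where "U = {a \<in> carrier Lamps. \<forall>j<n. supp G ((psi ^^ j) a) \<subseteq> S}"
  have "U \<subseteq> {a \<in> carrier Lamps. supp G a \<subseteq> S}"
    using n by (auto simp: U_def dest!: spec[of _ 0])
  moreover have "finite S"
    unfolding S_def using u closed by (simp add: carrier_lamp_sum)
  ultimately have "finite U"
    using finite_lamps_supported[OF fin] finite_subset by blast
  moreover have "lang_map Lamps psi ` U \<subseteq> U"
    using lang_map_iterates_supp[OF psi n period] group_hom.hom_closed[OF lang_hom]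
    by (auto simp: U_def)
  moreover have "inj_on (lang_map Lamps psi) U"
    using inj by (rule inj_on_subset) (auto simp: U_def)
  moreover have "u \<in> U"
    using u by (auto simp: U_def S_def)
  ultimately show "u \<in> lang_map Lamps psi ` carrier Lamps"
    using endo_inj_surj[of U "lang_map Lamps psi"] by (auto simp: U_def)
qed (use group_hom.hom_closed[OF comm_group.lang_map_hom[OF lamp_sum_comm_group psi]] in blast)

lemma lamp_eval_hom: "group_hom Lamps G (\<lambda>a. a x)"
  using lamp_sum_comm_group is_group
  by (auto simp: group_hom_def group_hom_axioms_def hom_def comm_group.axioms(2) lamp_closed)

lemma lamp_induct [consumes 1, case_names one delta mult]:
  assumes a: "a \<in> carrier Lamps"
    and one: "P (\<lambda>x. \<one>)"
    and delta: "\<And>y g. g \<in> carrier G \<Longrightarrow> P (\<lambda>x. if x = y then g else \<one>)"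
    and mult: "\<And>a b. a \<in> carrier Lamps \<Longrightarrow> b \<in> carrier Lamps \<Longrightarrow> P a \<Longrightarrow> P b \<Longrightarrow> P (\<lambda>x. a x \<otimes> b x)"
  shows "P a"
proof -
  have "\<forall>a. a \<in> carrier Lamps \<and> supp G a = A \<longrightarrow> P a" if "finite A" for A
    using that
  proof (induction A rule: finite_induct)
    case empty
    then show ?case
      using one by (auto simp: supp_def)
  next
    case (insert y A)
    show ?case
    proof (intro allI impI)
      fix a assume a: "a \<in> carrier Lamps \<and> supp G a = insert y A"
      let ?d = "\<lambda>x. if x = y then a y else \<one>"
      let ?a' = "\<lambda>x. if x = y then \<one> else a x"
      have supp_a': "supp G ?a' = A"
        using a insert.hyps(2) by (auto simp: supp_def)
      have a': "?a' \<in> carrier Lamps"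
        using a insert.hyps(1) by (auto simp: carrier_lamp_sum supp_a')
      have d: "?d \<in> carrier Lamps"
        using a by (auto simp: carrier_lamp_sum supp_def)
      have "a = (\<lambda>x. ?d x \<otimes> ?a' x)"
        using a by (auto simp: lamp_closed)
      moreover have "P ?d"
        using delta a by (simp add: lamp_closed)
      moreover have "P ?a'"
        using insert.IH a' supp_a' by blast
      ultimately show "P a"
        using mult[OF d a'] by simp
    qed
  qed
  then show ?thesis
    using a lamp_finite_supp by blast
qed

section \<open>Periodization\<close>

definition periodic :: "nat \<Rightarrow> (int^'n \<Rightarrow> 'a) set" where
  "periodic m = {f. (\<forall>x. f x \<in> carrier G) \<and> (\<forall>x. f (mod_vec m x) = f x)}"

definition torus_group :: "nat \<Rightarrow> (int^'n \<Rightarrow> 'a) monoid" where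
  "torus_group m = \<lparr>carrier = periodic m, mult = (\<lambda>f g x. f x \<otimes> g x), one = (\<lambda>x. \<one>)\<rparr>"

lemma carrier_torus_group [simp]: "carrier (torus_group m) = periodic m"
  by (simp add: torus_group_def)

lemma mult_torus_group [simp]: "f \<otimes>\<^bsub>torus_group m\<^esub> g = (\<lambda>x. f x \<otimes> g x)"
  by (simp add: torus_group_def)

lemma one_torus_group [simp]: "\<one>\<^bsub>torus_group m\<^esub> = (\<lambda>x. \<one>)"
  by (simp add: torus_group_def)

lemma torus_comm_group: "comm_group (torus_group m)"
proof (rule comm_groupI)
  fix f assume "f \<in> carrier (torus_group m)"
  then show "\<exists>g\<in>carrier (torus_group m). g \<otimes>\<^bsub>torus_group m\<^esub> f = \<one>\<^bsub>torus_group m\<^esub>"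
    by (intro bexI[of _ "\<lambda>x. inv (f x)"]) (auto simp: periodic_def)
next
  fix f g assume "f \<in> carrier (torus_group m)" "g \<in> carrier (torus_group m)"
  then show "f \<otimes>\<^bsub>torus_group m\<^esub> g = g \<otimes>\<^bsub>torus_group m\<^esub> f"
    by (auto simp: periodic_def m_comm)
qed (auto simp: periodic_def m_assoc)

lemma finite_periodic:
  assumes fin: "finite (carrier G)" and m: "0 < m"
  shows "finite (periodic m)"
proof -
  let ?S = "{g. \<forall>x. (x \<in> fundamental_box m \<longrightarrow> g x \<in> carrier G) \<and> (x \<notin> fundamental_box m \<longrightarrow> g x = \<one>)}"
  have "periodic m \<subseteq> (\<lambda>g x. g (mod_vec m x)) ` ?S"
  proof
    fix f assume f: "f \<in> periodic m"
    define g where "g = (\<lambda>y. if y \<in> fundamental_box m then f y else \<one>)"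
    have "f x = g (mod_vec m x)" for x
      using f mod_vec_in_fundamental_box[OF m, of x] by (simp add: g_def periodic_def)
    then have "f = (\<lambda>x. g (mod_vec m x))"
      by blast
    moreover have "g \<in> ?S"
      using f by (auto simp: g_def periodic_def)
    ultimately show "f \<in> (\<lambda>g x. g (mod_vec m x)) ` ?S"
      by blast
  qed
  moreover have "finite ?S"
    by (rule finite_set_of_finite_funs[OF finite_fundamental_box fin])
  ultimately show ?thesis
    using finite_subset by blast
qed

definition periodize :: "nat \<Rightarrow> (int^'n \<Rightarrow> 'a) \<Rightarrow> (int^'n \<Rightarrow> 'a)" where
  "periodize m a = (\<lambda>x. finprod G a {y \<in> supp G a. mod_vec m y = mod_vec m x})"

definition cut_off :: "nat \<Rightarrow> (int^'n \<Rightarrow> 'a) \<Rightarrow> (int^'n \<Rightarrow> 'a)" where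
  "cut_off m f = (\<lambda>x. if x \<in> fundamental_box m then f x else \<one>)"

lemma periodize_closed: "a \<in> carrier Lamps \<Longrightarrow> periodize m a \<in> periodic m"
  unfolding periodic_def periodize_def by (auto simp: lamp_closed intro!: finprod_closed)

lemma periodize_mult:
  assumes a: "a \<in> carrier Lamps" and b: "b \<in> carrier Lamps"
  shows "periodize m (\<lambda>x. a x \<otimes> b x) = (\<lambda>x. periodize m a x \<otimes> periodize m b x)"
proof
  fix x
  let ?T = "(supp G a \<union> supp G b) \<inter> {y. mod_vec m y = mod_vec m x}"
  have finT: "finite ?T"
    using a b by (simp add: lamp_finite_supp)
  have "finprod G (\<lambda>x. a x \<otimes> b x) {y \<in> supp G (\<lambda>x. a x \<otimes> b x). mod_vec m y = mod_vec m x}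
        = finprod G (\<lambda>x. a x \<otimes> b x) ?T"
    by (rule finprod_mono_neutral_cong_left[OF finT])
       (use supp_mult[of a b] a b in \<open>auto simp: supp_def lamp_closed\<close>)
  moreover have "finprod G a {y \<in> supp G a. mod_vec m y = mod_vec m x} = finprod G a ?T"
    by (rule finprod_mono_neutral_cong_left[OF finT]) (use a in \<open>auto simp: supp_def lamp_closed\<close>)
  moreover have "finprod G b {y \<in> supp G b. mod_vec m y = mod_vec m x} = finprod G b ?T"
    by (rule finprod_mono_neutral_cong_left[OF finT]) (use b in \<open>auto simp: supp_def lamp_closed\<close>)
  ultimately show "periodize m (\<lambda>x. a x \<otimes> b x) x = periodize m a x \<otimes> periodize m b x"
    unfolding periodize_def using a b by (simp add: lamp_closed Pi_def finprod_multf)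
qed

lemma periodize_hom: "group_hom Lamps (torus_group m) (periodize m)"
  using lamp_sum_comm_group torus_comm_group periodize_closed periodize_mult
  by (auto simp: group_hom_def group_hom_axioms_def hom_def comm_group.axioms(2))

lemma periodize_delta:
  assumes "g \<in> carrier G"
  shows "periodize m (\<lambda>x. if x = y then g else \<one>) = (\<lambda>x. if mod_vec m x = mod_vec m y then g else \<one>)"
proof
  fix x
  have "{w \<in> supp G (\<lambda>x. if x = y then g else \<one>). mod_vec m w = mod_vec m x}
        = (if g = \<one> \<or> mod_vec m x \<noteq> mod_vec m y then {} else {y})"
    by (auto simp: supp_def)
  then show "periodize m (\<lambda>x. if x = y then g else \<one>) x = (if mod_vec m x = mod_vec m y then g else \<one>)"
    using assms by (auto simp: periodize_def)
qed

lemma periodize_shift: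
  assumes a: "a \<in> carrier Lamps" and v: "mod_vec m v = 0"
  shows "periodize m (shift v a) = periodize m a"
proof
  fix x
  have "{y \<in> supp G (shift v a). mod_vec m y = mod_vec m x}
      = (\<lambda>y. y + v) ` {y \<in> supp G a. mod_vec m y = mod_vec m x}"
    using supp_shift[of G v a] mod_vec_add_period[OF v] by auto
  then have "periodize m (shift v a) x
      = finprod G (shift v a) ((\<lambda>y. y + v) ` {y \<in> supp G a. mod_vec m y = mod_vec m x})"
    by (simp add: periodize_def)
  also have "\<dots> = finprod G (\<lambda>y. shift v a (y + v)) {y \<in> supp G a. mod_vec m y = mod_vec m x}"
    by (rule finprod_reindex) (use a in \<open>auto simp: lamp_closed\<close>)
  finally show "periodize m (shift v a) x = periodize m a x"
    by (simp add: periodize_def)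
qed

lemma cut_off_closed: "f \<in> periodic m \<Longrightarrow> cut_off m f \<in> carrier Lamps"
  using finite_fundamental_box[of m]
  by (auto simp: carrier_lamp_sum cut_off_def periodic_def supp_def elim: finite_subset[rotated])

lemma periodize_cut_off:
  assumes f: "f \<in> periodic m" and m: "0 < m"
  shows "periodize m (cut_off m f) = f"
proof
  fix x
  have "{y \<in> supp G (cut_off m f). mod_vec m y = mod_vec m x} \<subseteq> {mod_vec m x}"
    by (auto simp: supp_def cut_off_def mod_vec_fundamental_box)
  then have "periodize m (cut_off m f) x = finprod G (cut_off m f) {mod_vec m x}"
    unfolding periodize_def
    by (intro finprod_mono_neutral_cong_left) (use f in \<open>auto simp: supp_def cut_off_def periodic_def\<close>)
  also have "\<dots> = f x"
    using f mod_vec_in_fundamental_box[OF m, of x] by (simp add: cut_off_def periodic_def)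
  finally show "periodize m (cut_off m f) x = f x" .
qed

lemma cut_off_mult: "cut_off m (\<lambda>x. f x \<otimes> g x) = (\<lambda>x. cut_off m f x \<otimes> cut_off m g x)"
  by (auto simp: cut_off_def)

text \<open>For \<open>m = 2L + 1\<close> distinct points of the box of radius \<open>L\<close> have distinct residues.\<close>

lemma periodize_eq_on_box:
  assumes a: "a \<in> carrier Lamps" and supp_a: "supp G a \<subseteq> {y. supnorm y \<le> int L}"
    and x: "supnorm x \<le> int L"
  shows "periodize (2 * L + 1) a x = a x"
proof -
  have "{y \<in> supp G a. mod_vec (2 * L + 1) y = mod_vec (2 * L + 1) x} \<subseteq> {x}"
  proof
    fix y assume y: "y \<in> {y \<in> supp G a. mod_vec (2 * L + 1) y = mod_vec (2 * L + 1) x}"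
    have "y $ i = x $ i" for i
    proof (rule mod_eq_imp_eq_if_small)
      show "y $ i mod int (2 * L + 1) = x $ i mod int (2 * L + 1)"
        using y by (simp add: mod_vec_def vec_eq_iff)
      show "\<bar>y $ i\<bar> \<le> int L" "\<bar>x $ i\<bar> \<le> int L"
        using y supp_a x component_le_supnorm[of y i] component_le_supnorm[of x i] by auto
    qed
    then show "y \<in> {x}"
      by (simp add: vec_eq_iff)
  qed
  then have "{y \<in> supp G a. mod_vec (2 * L + 1) y = mod_vec (2 * L + 1) x} = (if a x = \<one> then {} else {x})"
    by (auto simp: supp_def)
  then show ?thesis
    using a by (simp add: periodize_def lamp_closed)
qed

lemma lamps_supp_bounded:
  assumes "finite F" "F \<subseteq> carrier Lamps"
  obtains L where "\<And>a. a \<in> F \<Longrightarrow> supp G a \<subseteq> {y. supnorm y \<le> int L}"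
proof -
  define M where "M = Max (insert 0 (supnorm ` (\<Union>a \<in> F. supp G a)))"
  have fin: "finite (\<Union>a \<in> F. supp G a)"
    using assms lamp_finite_supp by blast
  have "supnorm y \<le> int (nat M)" if "a \<in> F" "y \<in> supp G a" for a y
  proof -
    have "supnorm y \<le> M"
      unfolding M_def by (rule Max_ge) (use that fin in auto)
    then show ?thesis
      by simp
  qed
  then show ?thesis
    using that by blast
qed

lemma periodize_inj_on_box:
  assumes F: "F \<subseteq> carrier Lamps" and supp_F: "\<And>a. a \<in> F \<Longrightarrow> supp G a \<subseteq> {y. supnorm y \<le> int L}"
  shows "inj_on (periodize (2 * L + 1)) F"
proof (rule inj_onI, rule ext)
  fix a b x assume a: "a \<in> F" and b: "b \<in> F" and eq: "periodize (2 * L + 1) a = periodize (2 * L + 1) b"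
  show "a x = b x"
  proof (cases "supnorm x \<le> int L")
    case True
    have "a x = periodize (2 * L + 1) a x"
      using F a by (intro periodize_eq_on_box[OF _ supp_F[OF a] True, symmetric]) blast
    also have "\<dots> = periodize (2 * L + 1) b x"
      by (simp only: eq)
    also have "\<dots> = b x"
      using F b by (intro periodize_eq_on_box[OF _ supp_F[OF b] True]) blast
    finally show ?thesis .
  next
    case False
    then have "x \<notin> supp G a" "x \<notin> supp G b"
      using supp_F[OF a] supp_F[OF b] by auto
    then show ?thesis
      by (simp add: supp_def)
  qed
qed

end

section \<open>Automorphisms of finite order\<close>

locale wreath_aut = lamplighter G index_type for G (structure) and index_type :: "'n::finite itself" +
  fixes phi :: "((int^'n \<Rightarrow> 'a) \<times> (int^'n)) \<Rightarrow> ((int^'n \<Rightarrow> 'a) \<times> (int^'n))"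
    and n :: nat
  assumes finite_carrier: "finite (carrier G)"
    and phi_iso: "phi \<in> iso Wreath Wreath"
    and period_pos: "0 < n"
    and phi_period: "\<And>g. g \<in> carrier Wreath \<Longrightarrow> (phi ^^ n) g = g"
begin

abbreviation "phiS \<equiv> restr_Sigma phi"
abbreviation "phibar \<equiv> induced G phi"

lemma phi_group_hom: "group_hom Wreath Wreath phi"
  using phi_iso wreath_group by (auto simp: iso_def group_hom_def group_hom_axioms_def)

sublocale phi: group_hom Wreath Wreath phi
  by (rule phi_group_hom)

lemma phi_lamp: assumes s: "s \<in> carrier Lamps" shows "phi (s, 0) = (phiS s, 0)"
proof -
  have sW: "(s, 0) \<in> carrier Wreath" using s by (simp add: carrier_wreath)
  have "phi (s, 0) [^]\<^bsub>Wreath\<^esub> order G = phi ((s, 0) [^]\<^bsub>Wreath\<^esub> order G)"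
    using phi.hom_nat_pow[OF sW] by simp
  also have "(s, 0) [^]\<^bsub>Wreath\<^esub> order G = \<one>\<^bsub>Wreath\<^esub>"
    using s by (simp add: pow_wreath_lamp pow_order_eq_1 carrier_lamp_sum)
  finally have "phi (s, 0) [^]\<^bsub>Wreath\<^esub> order G = \<one>\<^bsub>Wreath\<^esub>"
    by (simp only: phi.hom_one)
  then have "of_nat (order G) *s snd (phi (s, 0)) = 0"
    using snd_pow_wreath by (metis one_wreath snd_conv)
  moreover have "order G \<noteq> 0"
    using finite_carrier order_gt_0_iff_finite by simp
  ultimately show ?thesis
    by (simp add: restr_Sigma_def prod_eq_iff)
qed

lemma phiS_closed: "s \<in> carrier Lamps \<Longrightarrow> phiS s \<in> carrier Lamps"
  using phi.hom_closed[of "(s, 0)"] phi_lamp[of s] by (simp add: carrier_wreath)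

lemma phiS_hom: "group_hom Lamps Lamps phiS"
proof -
  have "phiS (s \<otimes>\<^bsub>Lamps\<^esub> t) = phiS s \<otimes>\<^bsub>Lamps\<^esub> phiS t"
    if "s \<in> carrier Lamps" "t \<in> carrier Lamps" for s t
  proof -
    have "phi ((s, 0) \<otimes>\<^bsub>Wreath\<^esub> (t, 0)) = phi (s, 0) \<otimes>\<^bsub>Wreath\<^esub> phi (t, 0)"
      using that by (intro phi.hom_mult) (simp_all add: carrier_wreath)
    then show ?thesis
      using that phi_lamp lamp_mult_closed by (simp add: carrier_lamp_sum)
  qed
  then show ?thesis
    using lamp_sum_comm_group phiS_closed
    by (auto simp: group_hom_def group_hom_axioms_def hom_def comm_group.axioms(2))
qed

lemma phiS_mult:
  "s \<in> carrier Lamps \<Longrightarrow> t \<in> carrier Lamps \<Longrightarrow> phiS (\<lambda>x. s x \<otimes> t x) = (\<lambda>x. phiS s x \<otimes> phiS t x)"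
  using group_hom.hom_mult[OF phiS_hom] by simp

lemma phiS_inv: "s \<in> carrier Lamps \<Longrightarrow> phiS (\<lambda>x. inv (s x)) = (\<lambda>x. inv (phiS s x))"
  using group_hom.hom_inv[OF phiS_hom] by (simp add: inv_lamp_sum phiS_closed)

lemma snd_phi: assumes g: "g \<in> carrier Wreath" shows "snd (phi g) = phibar (snd g)"
proof -
  obtain s z where g_eq: "g = (s, z)" by (cases g)
  have s: "s \<in> carrier Lamps" using g g_eq by (simp add: carrier_wreath)
  have "phi g = phi ((s, 0) \<otimes>\<^bsub>Wreath\<^esub> ((\<lambda>x. \<one>), z))"
    using s g_eq by (simp add: carrier_lamp_sum)
  also have "\<dots> = phi (s, 0) \<otimes>\<^bsub>Wreath\<^esub> phi ((\<lambda>x. \<one>), z)"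
    using s unit_in_wreath by (intro phi.hom_mult) (simp_all add: carrier_wreath)
  finally show ?thesis
    using g_eq phi_lamp[OF s] by (simp add: snd_mult_wreath induced_def proj_def)
qed

sublocale phibar: additive phibar
proof
  fix z w :: "int^'n"
  have "phi (((\<lambda>x. \<one>), z) \<otimes>\<^bsub>Wreath\<^esub> ((\<lambda>x. \<one>), w))
        = phi ((\<lambda>x. \<one>), z) \<otimes>\<^bsub>Wreath\<^esub> phi ((\<lambda>x. \<one>), w)"
    by (rule phi.hom_mult[OF unit_in_wreath unit_in_wreath])
  then show "phibar (z + w) = phibar z + phibar w"
    by (simp add: induced_def proj_def snd_mult_wreath)
qed

lemma phibar_smult: "phibar (of_nat c *s v) = of_nat c *s phibar v"
  by (induction c) (simp_all add: phibar.zero phibar.add vector_sadd_rdistrib)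

text \<open>Conjugating \<open>(s, 0)\<close> by \<open>(1, w)\<close> shifts \<open>s\<close> by \<open>w\<close>; applying \<open>\<phi>\<close> to this identity gives the
  twisted equivariance of \<open>\<phi>|\<^sub>\<Sigma>\<close>.\<close>

lemma phiS_shift: assumes s: "s \<in> carrier Lamps"
  shows "phiS (shift w s) = shift (phibar w) (phiS s)"
proof -
  let ?u = "((\<lambda>x. \<one>), w)"
  obtain c where c: "phi ?u = (c, phibar w)"
    using snd_phi[OF unit_in_wreath] by (metis prod.collapse snd_conv)
  have cL: "c \<in> carrier Lamps"
    using phi.hom_closed[OF unit_in_wreath[of w]] c by (simp add: carrier_wreath)
  have sW: "(s, 0) \<in> carrier Wreath" using s by (simp add: carrier_wreath)
  have "?u \<otimes>\<^bsub>Wreath\<^esub> (s, 0) \<otimes>\<^bsub>Wreath\<^esub> inv\<^bsub>Wreath\<^esub> ?u = (shift w s, 0)"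
    using s unit_in_wreath[of w] by (simp add: inv_wreath carrier_lamp_sum shift_def)
  then have "phi (shift w s, 0) = phi ?u \<otimes>\<^bsub>Wreath\<^esub> phi (s, 0) \<otimes>\<^bsub>Wreath\<^esub> inv\<^bsub>Wreath\<^esub> phi ?u"
    using sW unit_in_wreath[of w]
    by (metis Wr.inv_closed Wr.m_closed phi.hom_inv phi.hom_mult)
  also have "\<dots> = (shift (phibar w) (phiS s), 0)"
    using cL phiS_closed[OF s] c phi_lamp[OF s] inv_wreath[of c "phibar w"]
    by (simp add: carrier_wreath carrier_lamp_sum m_assoc m_lcomm[of "c _"] shift_def)
  finally show ?thesis
    by (simp add: restr_Sigma_def)
qed

lemma snd_phi_funpow: "g \<in> carrier Wreath \<Longrightarrow> snd ((phi ^^ j) g) = (phibar ^^ j) (snd g)"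
proof (induction j)
  case (Suc j)
  have "(phi ^^ j) g \<in> carrier Wreath"
    using Suc.prems by (induction j) simp_all
  then show ?case using Suc by (simp add: snd_phi)
qed simp

lemma phibar_period: "(phibar ^^ n) z = z"
  using snd_phi_funpow[OF unit_in_wreath, of n z] phi_period[OF unit_in_wreath] by simp

lemma phiS_funpow: "s \<in> carrier Lamps \<Longrightarrow> (phi ^^ j) (s, 0) = ((phiS ^^ j) s, 0) \<and> (phiS ^^ j) s \<in> carrier Lamps"
  by (induction j) (auto simp: phi_lamp phiS_closed)

lemma phiS_period: "s \<in> carrier Lamps \<Longrightarrow> (phiS ^^ n) s = s"
  using phiS_funpow[of s n] phi_period[of "(s, 0)"] by (simp add: carrier_wreath)

lemma phibar_bij: "bij phibar"
proof (rule o_bij)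
  have n: "n = Suc (n - 1)" using period_pos by simp
  show "phibar ^^ (n - 1) \<circ> phibar = id" "phibar \<circ> phibar ^^ (n - 1) = id"
    using phibar_period by (subst (asm) n, simp add: fun_eq_iff funpow_swap1)+
qed

lemma snd_twisted_conj:
  assumes "h \<in> carrier Wreath" "g \<in> carrier Wreath"
  shows "snd (h \<otimes>\<^bsub>Wreath\<^esub> g \<otimes>\<^bsub>Wreath\<^esub> phi (inv\<^bsub>Wreath\<^esub> h)) = snd h + snd g + phibar (- snd h)"
  using assms by (simp add: snd_mult_wreath snd_phi snd_inv_wreath phibar.minus)

lemma proj_reid_class:
  assumes g: "g \<in> carrier Wreath"
  shows "proj ` reid_class Wreath phi g = reid_class (Zk :: (int^'n) monoid) phibar (proj g)"
proof (intro equalityI subsetI)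
  fix y assume "y \<in> proj ` reid_class Wreath phi g"
  then obtain h where h: "h \<in> carrier Wreath"
    and y: "y = proj (h \<otimes>\<^bsub>Wreath\<^esub> g \<otimes>\<^bsub>Wreath\<^esub> phi (inv\<^bsub>Wreath\<^esub> h))"
    by (auto simp: reid_class_def)
  then show "y \<in> reid_class Zk phibar (proj g)"
    unfolding reid_class_Zk proj_def using g by (simp only: snd_twisted_conj) blast
next
  fix y assume "y \<in> reid_class (Zk :: (int^'n) monoid) phibar (proj g)"
  then obtain w where y: "y = w + snd g + phibar (- w)"
    by (auto simp: reid_class_Zk proj_def)
  let ?h = "((\<lambda>x. \<one>), w)"
  have "?h \<otimes>\<^bsub>Wreath\<^esub> g \<otimes>\<^bsub>Wreath\<^esub> phi (inv\<^bsub>Wreath\<^esub> ?h) \<in> reid_class Wreath phi g"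
    unfolding reid_class_def using unit_in_wreath[of w] by blast
  moreover have "proj (?h \<otimes>\<^bsub>Wreath\<^esub> g \<otimes>\<^bsub>Wreath\<^esub> phi (inv\<^bsub>Wreath\<^esub> ?h)) = y"
    using y g unit_in_wreath[of w] by (simp only: proj_def snd_twisted_conj) simp
  ultimately show "y \<in> proj ` reid_class Wreath phi g"
    by (rule rev_image_eqI[OF _ sym])
qed

lemma finite_reid_classes_Zk:
  assumes "finite (reid_classes Wreath phi)"
  shows "finite (reid_classes (Zk :: (int^'n) monoid) phibar)"
proof -
  have "proj ` carrier Wreath = UNIV"
    using unit_in_wreath by (force simp: proj_def)
  then have "reid_classes (Zk :: (int^'n) monoid) phibar
      = (\<lambda>g. reid_class (Zk :: (int^'n) monoid) phibar (proj g)) ` carrier Wreath"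
    unfolding reid_classes_def carrier_Zk by (simp only: image_image[symmetric])
  also have "\<dots> = (\<lambda>C. proj ` C) ` reid_classes Wreath phi"
    unfolding reid_classes_def image_image by (simp add: proj_reid_class)
  finally have "reid_classes (Zk :: (int^'n) monoid) phibar = (\<lambda>C. proj ` C) ` reid_classes Wreath phi" .
  then show ?thesis
    using assms by simp
qed

definition orbit_sum :: "int^'n \<Rightarrow> int^'n" where
  "orbit_sum z = (\<Sum>j<n. (phibar ^^ j) z)"

lemma phibar_funpow_add: "(phibar ^^ j) (z + w) = (phibar ^^ j) z + (phibar ^^ j) w"
  by (induction j) (simp_all add: phibar.add)

sublocale orbit_sum: additive orbit_sum
  by unfold_locales (simp add: orbit_sum_def phibar_funpow_add sum.distrib)

lemma orbit_sum_phibar: "orbit_sum (phibar z) = orbit_sum z"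
proof -
  let ?f = "\<lambda>j. (phibar ^^ j) z"
  have "?f 0 + orbit_sum (phibar z) = (\<Sum>j<Suc n. ?f j)"
    unfolding orbit_sum_def sum.lessThan_Suc_shift by (simp add: funpow_swap1)
  also have "\<dots> = orbit_sum z + ?f 0"
    unfolding orbit_sum_def sum.lessThan_Suc by (simp add: phibar_period)
  finally show ?thesis
    by simp
qed

lemma phibar_orbit_sum: "phibar (orbit_sum z) = orbit_sum z"
  using orbit_sum_phibar[of z] by (simp add: orbit_sum_def phibar.sum funpow_swap1)

lemma orbit_sum_reid_class:
  "y \<in> reid_class (Zk :: (int^'n) monoid) phibar x \<Longrightarrow> orbit_sum y = orbit_sum x"
  by (auto simp: reid_class_Zk orbit_sum.add orbit_sum.diff orbit_sum_phibar phibar.minus)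

section \<open>Twisted automorphisms of the lamp group\<close>

definition tau_phi :: "int^'n \<Rightarrow> (int^'n \<Rightarrow> 'a) \<Rightarrow> (int^'n \<Rightarrow> 'a)" where
  "tau_phi z s = shift z (phiS s)"

lemma tau_phi_hom: "group_hom Lamps Lamps (tau_phi z)"
  using lamp_sum_comm_group lamp_shift_closed phiS_closed phiS_mult
  by (auto simp: group_hom_def group_hom_axioms_def hom_def comm_group.axioms(2) tau_phi_def
      lamp_mult_closed)

lemma tau_phi_closed: "s \<in> carrier Lamps \<Longrightarrow> tau_phi z s \<in> carrier Lamps"
  by (rule group_hom.hom_closed[OF tau_phi_hom])

lemma tau_phi_shift:
  "s \<in> carrier Lamps \<Longrightarrow> tau_phi z (shift w s) = shift (phibar w) (tau_phi z s)"
  by (simp add: tau_phi_def phiS_shift shift_shift add.commute)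

lemma tau_phi_funpow:
  "s \<in> carrier Lamps \<Longrightarrow> (tau_phi z ^^ j) s = shift (\<Sum>i<j. (phibar ^^ i) z) ((phiS ^^ j) s)"
proof (induction j)
  case 0
  then show ?case by (simp add: shift_def)
next
  case (Suc j)
  have "(tau_phi z ^^ Suc j) s = shift z (phiS (shift (\<Sum>i<j. (phibar ^^ i) z) ((phiS ^^ j) s)))"
    by (simp only: funpow.simps(2) o_apply Suc.IH[OF Suc.prems] tau_phi_def)
  also have "\<dots> = shift (z + phibar (\<Sum>i<j. (phibar ^^ i) z)) ((phiS ^^ Suc j) s)"
    using phiS_shift phiS_funpow Suc.prems by (simp add: shift_shift)
  also have "z + phibar (\<Sum>i<j. (phibar ^^ i) z) = (\<Sum>i<Suc j. (phibar ^^ i) z)"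
    unfolding sum.lessThan_Suc_shift by (simp add: phibar.sum funpow_swap1)
  finally show ?case .
qed

lemma twisted_conj_by_lamp:
  assumes u: "u \<in> carrier Lamps" and s: "s \<in> carrier Lamps"
  shows "(u, 0) \<otimes>\<^bsub>Wreath\<^esub> (s, z) \<otimes>\<^bsub>Wreath\<^esub> phi (inv\<^bsub>Wreath\<^esub> (u, 0))
       = ((\<lambda>x. s x \<otimes> lang_map Lamps (tau_phi z) u x), z)"
proof -
  have "phi (inv\<^bsub>Wreath\<^esub> (u, 0)) = ((\<lambda>x. inv (phiS u x)), 0)"
    using u inv_wreath[of u 0] phi_lamp[OF lamp_inv_closed[OF u]] phiS_inv[OF u]
    by (simp add: carrier_wreath)
  then show ?thesis
    using u s lamp_closed phiS_closed[OF u] lamp_shift_closed[OF phiS_closed[OF u]]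
    by (simp add: lang_map_def tau_phi_def inv_lamp_sum m_ac)
qed

definition tau_mod :: "int^'n \<Rightarrow> nat \<Rightarrow> (int^'n \<Rightarrow> 'a) \<Rightarrow> (int^'n \<Rightarrow> 'a)" where
  "tau_mod z m f = periodize m (tau_phi z (cut_off m f))"

lemma phibar_mod_vec_zero: "mod_vec m v = 0 \<Longrightarrow> mod_vec m (phibar v) = 0"
  by (auto simp: mod_vec_eq_0_iff phibar_smult)

text \<open>Periodization kills translations by \<open>m\<int>\<^sup>k\<close>, and \<open>\<tau>\<^sub>z \<circ> \<phi>\<close> turns them into translations by
  \<open>\<phi>\<acute>(m\<int>\<^sup>k) \<subseteq> m\<int>\<^sup>k\<close>; so it suffices to check single lamps in the fundamental box.\<close>

lemma periodize_tau_phi: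
  assumes m: "0 < m" and a: "a \<in> carrier Lamps"
  shows "periodize m (tau_phi z a) = tau_mod z m (periodize m a)"
  using a
proof (induction rule: lamp_induct)
  case one
  have "tau_phi z (\<lambda>x. \<one>) = (\<lambda>x. \<one>)"
    using group_hom.hom_one[OF tau_phi_hom] by simp
  moreover have "periodize m (\<lambda>x. \<one>) = (\<lambda>x. \<one>)" "cut_off m (\<lambda>x. \<one>) = (\<lambda>x. \<one>)"
    by (simp_all add: periodize_def supp_def cut_off_def)
  ultimately show ?case
    by (simp add: tau_mod_def)
next
  case (delta y g)
  let ?d = "\<lambda>x. if x = y then g else \<one>"
  let ?d' = "\<lambda>x. if x = mod_vec m y then g else \<one>"
  have d': "?d' \<in> carrier Lamps"
    using delta by (simp add: carrier_lamp_sum supp_def)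
  have cut: "cut_off m (periodize m ?d) = ?d'"
    using mod_vec_in_fundamental_box[OF m, of y] periodize_delta[OF delta]
    by (auto simp: cut_off_def mod_vec_fundamental_box fun_eq_iff)
  have "?d = shift (y - mod_vec m y) ?d'"
    by (auto simp: fun_eq_iff)
  then have "periodize m (tau_phi z ?d)
      = periodize m (shift (phibar (y - mod_vec m y)) (tau_phi z ?d'))"
    using tau_phi_shift[OF d'] by metis
  also have "\<dots> = periodize m (tau_phi z ?d')"
    by (rule periodize_shift[OF tau_phi_closed[OF d'] phibar_mod_vec_zero[OF mod_vec_diff_mod_vec]])
  finally show ?case
    unfolding tau_mod_def cut .
next
  case (mult a b)
  then show ?case
    using periodize_mult periodize_closed tau_phi_closed cut_off_mult cut_off_closed
      group_hom.hom_mult[OF tau_phi_hom] lamp_mult_closed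
    by (simp add: tau_mod_def)
qed

lemma tau_mod_hom: "group_hom (torus_group m) (torus_group m) (tau_mod z m)"
proof -
  have closed: "tau_mod z m f \<in> periodic m" if "f \<in> periodic m" for f
    using that by (simp add: tau_mod_def periodize_closed tau_phi_closed cut_off_closed)
  have "tau_mod z m (\<lambda>x. f x \<otimes> g x) = (\<lambda>x. tau_mod z m f x \<otimes> tau_mod z m g x)"
    if "f \<in> periodic m" "g \<in> periodic m" for f g
    using that cut_off_closed tau_phi_closed group_hom.hom_mult[OF tau_phi_hom]
    by (simp add: tau_mod_def cut_off_mult periodize_mult)
  then show ?thesis
    using closed torus_comm_group
    by (auto simp: group_hom_def group_hom_axioms_def hom_def comm_group.axioms(2))
qed

lemma periodize_lang_map:
  assumes m: "0 < m" and u: "u \<in> carrier Lamps"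
  shows "periodize m (lang_map Lamps (tau_phi z) u)
       = lang_map (torus_group m) (tau_mod z m) (periodize m u)"
proof -
  have "periodize m (lang_map Lamps (tau_phi z) u)
      = periodize m u \<otimes>\<^bsub>torus_group m\<^esub> inv\<^bsub>torus_group m\<^esub> periodize m (tau_phi z u)"
    unfolding lang_map_def using u tau_phi_closed[OF u] lamp_sum_comm_group
    by (simp only: group_hom.hom_mult[OF periodize_hom] group_hom.hom_inv[OF periodize_hom]
        comm_group.axioms(2) group.inv_closed)
  then show ?thesis
    using periodize_tau_phi[OF m u] by (simp only: lang_map_def)
qed

definition base_orbit :: "(int^'n) set" where
  "base_orbit = (\<lambda>j. (phibar ^^ j) (\<chi> i. 1)) ` {..<n}"

lemma finite_base_orbit: "finite base_orbit"
  by (simp add: base_orbit_def)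

lemma base_orbit_nonempty: "base_orbit \<noteq> {}"
  using period_pos by (auto simp: base_orbit_def)

lemma phibar_base_orbit: "phibar ` base_orbit = base_orbit"
proof (rule endo_inj_surj[OF finite_base_orbit])
  show "phibar ` base_orbit \<subseteq> base_orbit"
  proof
    fix v assume "v \<in> phibar ` base_orbit"
    then obtain j where "v = (phibar ^^ Suc j) (\<chi> i. 1)"
      by (auto simp: base_orbit_def)
    also have "\<dots> = (phibar ^^ (Suc j mod n)) (\<chi> i. 1)"
      by (rule funpow_mod_eq[symmetric]) (rule phibar_period)
    finally show "v \<in> base_orbit"
      using period_pos by (simp add: base_orbit_def)
  qed
qed (use phibar_bij bij_is_inj inj_on_subset in blast)

lemma zero_notin_base_orbit: "0 \<notin> base_orbit"
proof
  assume "0 \<in> base_orbit"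
  then obtain j where "(phibar ^^ j) (\<chi> i. 1) = 0"
    by (auto simp: base_orbit_def)
  moreover have "(phibar ^^ j) 0 = 0"
    by (induction j) (simp_all add: phibar.zero)
  moreover have "inj (phibar ^^ j)"
    by (rule inj_fn[OF bij_is_inj[OF phibar_bij]])
  ultimately have "(\<chi> i. 1) = (0 :: int^'n)"
    by (metis injD)
  then show False
    by (simp add: vec_eq_iff)
qed

lemma base_orbit_supnorm_max:
  obtains u0 where "u0 \<in> base_orbit" "1 \<le> supnorm u0"
    "\<And>u. u \<in> base_orbit \<Longrightarrow> supnorm u \<le> supnorm u0"
proof -
  have "Max (supnorm ` base_orbit) \<in> supnorm ` base_orbit"
    using finite_base_orbit base_orbit_nonempty by simp
  then obtain u0 where u0: "u0 \<in> base_orbit" "supnorm u0 = Max (supnorm ` base_orbit)"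
    by auto
  show ?thesis
  proof (rule that[OF u0(1)])
    show "1 \<le> supnorm u0"
      using u0(1) zero_notin_base_orbit by (intro one_le_supnorm) auto
    show "supnorm u \<le> supnorm u0" if "u \<in> base_orbit" for u
      using that u0(2) finite_base_orbit by simp
  qed
qed

text \<open>Products of translates of a lamp along a dilated \<open>\<phi>\<acute>\<close>-orbit inherit fixedness under
  \<open>\<tau>\<^sub>z \<circ> \<phi>\<close> and, for large dilations, consist of disjoint copies of the lamp.\<close>

definition orbit_product :: "nat \<Rightarrow> (int^'n \<Rightarrow> 'a) \<Rightarrow> (int^'n \<Rightarrow> 'a)" where
  "orbit_product c s = finprod Lamps (\<lambda>u. shift (of_nat c *s u) s) base_orbit"

lemma orbit_product_closed: "s \<in> carrier Lamps \<Longrightarrow> orbit_product c s \<in> carrier Lamps"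
  unfolding orbit_product_def
  by (intro comm_monoid.finprod_closed comm_group.axioms(1)[OF lamp_sum_comm_group])
     (auto intro: lamp_shift_closed)

lemma orbit_product_apply:
  "s \<in> carrier Lamps \<Longrightarrow> orbit_product c s x = finprod G (\<lambda>u. s (x - of_nat c *s u)) base_orbit"
  unfolding orbit_product_def
  using hom_finprod[OF lamp_eval_hom lamp_sum_comm_group comm_group_axioms finite_base_orbit,
      of "\<lambda>u. shift (of_nat c *s u) s" x]
  by (auto intro: lamp_shift_closed)

lemma tau_phi_orbit_product:
  assumes s: "s \<in> carrier Lamps" and fixed: "tau_phi z s = s"
  shows "tau_phi z (orbit_product c s) = orbit_product c s"
proof -
  interpret L: comm_group Lamps
    by (rule lamp_sum_comm_group)
  have shifts: "(\<lambda>u. shift (of_nat c *s u) s) \<in> A \<rightarrow> carrier Lamps" for A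
    using lamp_shift_closed[OF s] by blast
  have "tau_phi z (orbit_product c s) = finprod Lamps (\<lambda>u. tau_phi z (shift (of_nat c *s u) s)) base_orbit"
    unfolding orbit_product_def
    by (rule hom_finprod[OF tau_phi_hom lamp_sum_comm_group lamp_sum_comm_group finite_base_orbit shifts])
  also have "\<dots> = finprod Lamps (\<lambda>u. shift (of_nat c *s u) s) (phibar ` base_orbit)"
    using tau_phi_shift[OF s] fixed phibar_smult bij_is_inj[OF phibar_bij]
    by (simp add: L.finprod_reindex[OF shifts] inj_on_subset)
  finally show ?thesis
    by (simp add: phibar_base_orbit orbit_product_def)
qed

lemma orbit_product_supp:
  assumes s: "s \<in> carrier Lamps" and D: "\<forall>y \<in> supp G s. supnorm y \<le> D"
    and B: "\<forall>u \<in> base_orbit. supnorm u \<le> B" and x: "orbit_product c s x \<noteq> \<one>"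
  shows "supnorm x \<le> int c * B + D"
proof -
  obtain u where u: "u \<in> base_orbit" "s (x - of_nat c *s u) \<noteq> \<one>"
    using x finprod_one_eqI[of base_orbit "\<lambda>u. s (x - of_nat c *s u)"] by (auto simp: orbit_product_apply[OF s])
  have "supnorm x \<le> supnorm (x - of_nat c *s u) + supnorm (of_nat c *s u)"
    using supnorm_triangle[of "x - of_nat c *s u" "of_nat c *s u"] by simp
  moreover have "supnorm (x - of_nat c *s u) \<le> D"
    using D u by (simp add: supp_def)
  moreover have "supnorm (of_nat c *s u) \<le> int c * B"
    using B u by (simp add: supnorm_smult mult_left_mono)
  ultimately show ?thesis
    by linarith
qed

lemma orbit_product_peak:
  assumes s: "s \<in> carrier Lamps" and D: "\<forall>y \<in> supp G s. supnorm y \<le> D"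
    and x0: "x0 \<in> supp G s" and u0: "u0 \<in> base_orbit" and c: "2 * D + 1 \<le> int c"
  shows "orbit_product c s (of_nat c *s u0 + x0) = s x0"
proof -
  have other: "s (of_nat c *s u0 + x0 - of_nat c *s u) = \<one>" if u: "u \<in> base_orbit" "u \<noteq> u0" for u
  proof -
    have eq: "of_nat c *s u0 + x0 - of_nat c *s u = of_nat c *s (u0 - u) + x0"
      by (simp add: vector_ssub_ldistrib algebra_simps)
    have "1 \<le> supnorm (u0 - u)"
      using u by (intro one_le_supnorm) simp
    then have "int c \<le> int c * supnorm (u0 - u)"
      using mult_left_mono[of 1 _ "int c"] by simp
    then have "int c \<le> supnorm (of_nat c *s (u0 - u))"
      by (simp only: supnorm_smult)
    then have "D < supnorm (of_nat c *s (u0 - u) + x0)"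
      using supnorm_diff_le[of "of_nat c *s (u0 - u)" x0] D x0 c by fastforce
    then show ?thesis
      unfolding eq using D by (auto simp: supp_def)
  qed
  have "orbit_product c s (of_nat c *s u0 + x0)
      = finprod G (\<lambda>u. if u0 = u then s x0 else \<one>) base_orbit"
    unfolding orbit_product_apply[OF s]
    by (rule finprod_cong') (use other s in \<open>auto simp: lamp_closed\<close>)
  also have "\<dots> = s x0"
    by (rule finprod_singleton[OF u0 finite_base_orbit]) (use s in \<open>auto simp: lamp_closed\<close>)
  finally show ?thesis .
qed

lemma orbit_product_vanishes:
  assumes s: "s \<in> carrier Lamps" and D: "\<forall>y \<in> supp G s. supnorm y \<le> D" and x0: "supnorm x0 \<le> D"
    and u0: "\<And>u. u \<in> base_orbit \<Longrightarrow> supnorm u \<le> supnorm u0" "1 \<le> supnorm u0"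
    and c: "int c' + (2 * D + 1) \<le> int c"
  shows "orbit_product c' s (of_nat c *s u0 + x0) = \<one>"
proof (rule ccontr)
  let ?B = "supnorm u0"
  assume "orbit_product c' s (of_nat c *s u0 + x0) \<noteq> \<one>"
  then have near: "supnorm (of_nat c *s u0 + x0) \<le> int c' * ?B + D"
    using u0(1) by (intro orbit_product_supp[OF s D]) auto
  have far: "int c * ?B - supnorm x0 \<le> supnorm (of_nat c *s u0 + x0)"
    using supnorm_diff_le[of "of_nat c *s u0" x0] by (simp only: supnorm_smult)
  have "(int c' + (2 * D + 1)) * ?B \<le> int c * ?B"
    using c u0(2) by (intro mult_right_mono) simp_all
  moreover have "2 * D + 1 \<le> (2 * D + 1) * ?B"
    using u0(2) x0 supnorm_nonneg[of x0] mult_left_mono[of 1 ?B "2 * D + 1"] by simp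
  ultimately show False
    using near far x0 distrib_right[of "int c'" "2 * D + 1" ?B] by linarith
qed

lemma infinite_tau_phi_fixed_points:
  assumes s: "s \<in> carrier Lamps" and fixed: "tau_phi z s = s" and nontrivial: "s \<noteq> (\<lambda>x. \<one>)"
  shows "infinite {t \<in> carrier Lamps. tau_phi z t = t}"
proof -
  obtain x0 where x0: "x0 \<in> supp G s"
    using nontrivial by (auto simp: supp_def)
  obtain L where "supp G s \<subseteq> {y. supnorm y \<le> int L}"
    using lamps_supp_bounded[of "{s}"] s by auto
  then have D: "\<forall>y \<in> supp G s. supnorm y \<le> int L"
    by blast
  obtain u0 where u0: "u0 \<in> base_orbit" "1 \<le> supnorm u0"
    "\<And>u. u \<in> base_orbit \<Longrightarrow> supnorm u \<le> supnorm u0"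
    using base_orbit_supnorm_max by blast
  define t where "t i = orbit_product ((2 * L + 1) * Suc i) s" for i
  define p where "p i = of_nat ((2 * L + 1) * Suc i) *s u0 + x0" for i
  have peak: "t i (p i) = s x0" for i
    unfolding t_def p_def by (rule orbit_product_peak[OF s D x0 u0(1)]) simp
  have vanish: "t j (p i) = \<one>" if "j < i" for i j
  proof -
    have "(2 * L + 1) * Suc j + (2 * L + 1) \<le> (2 * L + 1) * Suc i"
      using that mult_le_mono2[of "Suc (Suc j)" "Suc i" "2 * L + 1"] by simp
    then have "int ((2 * L + 1) * Suc j) + (2 * int L + 1) \<le> int ((2 * L + 1) * Suc i)"
      by linarith
    then show ?thesis
      unfolding t_def p_def using D x0 u0(2,3) by (intro orbit_product_vanishes[OF s D]) auto
  qed
  have "inj t"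
  proof (rule linorder_injI)
    fix j i :: nat assume "j < i"
    then show "t j \<noteq> t i"
      using peak[of i] vanish[of j i] x0 by (auto simp: supp_def)
  qed
  moreover have "range t \<subseteq> {t \<in> carrier Lamps. tau_phi z t = t}"
    using orbit_product_closed[OF s] tau_phi_orbit_product[OF s fixed] by (auto simp: t_def)
  ultimately show ?thesis
    using infinite_iff_countable_subset by blast
qed

end

section \<open>Finite Reidemeister number\<close>

locale wreath_aut_fin = wreath_aut G index_type phi n
  for G (structure) and index_type :: "'n::finite itself" and phi n +
  assumes finite_reid_classes: "finite (reid_classes Wreath phi)"
begin

lemma phibar_fixed_imp_zero:
  assumes v: "phibar v = v" shows "v = 0"
proof (rule ccontr)
  assume v0: "v \<noteq> 0"
  have "(phibar ^^ j) (of_nat c *s v) = of_nat c *s v" for j c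
    by (induction j) (simp_all add: phibar_smult v)
  then have orbit_sum_mult: "orbit_sum (of_nat c *s v) = of_nat (n * c) *s v" for c
    by (simp add: orbit_sum_def vec_eq_iff of_nat_index)
  let ?C = "\<lambda>c. reid_class (Zk :: (int^'n) monoid) phibar (of_nat c *s v)"
  have "inj ?C"
  proof (rule injI)
    fix c d assume "?C c = ?C d"
    moreover have "of_nat c *s v \<in> ?C c"
      unfolding reid_class_Zk by (rule CollectI, rule exI[of _ 0]) (simp add: phibar.zero)
    ultimately have "of_nat c *s v \<in> ?C d"
      by simp
    then have "of_nat (n * c) *s v = of_nat (n * d) *s v"
      using orbit_sum_reid_class orbit_sum_mult by metis
    then have "(int (n * c) - int (n * d)) *s v = 0"
      by (simp only: vector_sub_rdistrib of_nat_id) simp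
    then have "int (n * c) = int (n * d)"
      using v0 by (simp only: vector_mul_eq_0) simp
    then show "c = d"
      using period_pos by simp
  qed
  moreover have "range ?C \<subseteq> reid_classes Zk phibar"
    by (auto simp: reid_classes_def)
  ultimately have "finite (range ?C)"
    using finite_reid_classes_Zk[OF finite_reid_classes] finite_subset by blast
  then show False
    using \<open>inj ?C\<close> finite_imageD by blast
qed

lemma orbit_sum_eq_0: "orbit_sum z = 0"
  using phibar_fixed_imp_zero phibar_orbit_sum by blast

lemma tau_phi_period: "s \<in> carrier Lamps \<Longrightarrow> (tau_phi z ^^ n) s = s"
  using orbit_sum_eq_0[of z] phiS_period[of s]
  by (simp add: tau_phi_funpow orbit_sum_def shift_def)

text \<open>Two elements of \<open>\<Sigma> \<times> {z}\<close> are \<open>\<phi>\<close>-conjugate only via elements of \<open>\<Sigma>\<close>, since \<open>\<phi>\<acute>\<close>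
  has no nonzero fixed vector.\<close>

lemma same_reid_class_imp_lang_map_diff:
  assumes s: "s \<in> carrier Lamps" and s': "s' \<in> carrier Lamps"
    and eq: "reid_class Wreath phi (s, z) = reid_class Wreath phi (s', z)"
  shows "\<exists>u \<in> carrier Lamps. s' = (\<lambda>x. s x \<otimes> lang_map Lamps (tau_phi z) u x)"
proof -
  have sW: "(s, z) \<in> carrier Wreath" and s'W: "(s', z) \<in> carrier Wreath"
    using s s' by (simp_all add: carrier_wreath)
  have "(s', z) \<in> reid_class Wreath phi (s, z)"
    using Wr.reid_class_self[OF phi_group_hom s'W] eq by simp
  then obtain h where h: "h \<in> carrier Wreath"
    and conj: "(s', z) = h \<otimes>\<^bsub>Wreath\<^esub> (s, z) \<otimes>\<^bsub>Wreath\<^esub> phi (inv\<^bsub>Wreath\<^esub> h)"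
    by (auto simp: reid_class_def)
  obtain u w where uw: "h = (u, w)"
    by (cases h)
  have u: "u \<in> carrier Lamps"
    using h uw by (simp add: carrier_wreath)
  have "z = w + z + phibar (- w)"
    using arg_cong[OF conj, of snd] snd_twisted_conj[OF h sW] uw by simp
  then have "w = 0"
    using phibar_fixed_imp_zero by (simp add: phibar.minus)
  then have "(s', z) = ((\<lambda>x. s x \<otimes> lang_map Lamps (tau_phi z) u x), z)"
    using conj by (simp only: uw \<open>w = 0\<close> twisted_conj_by_lamp[OF u s])
  then show ?thesis
    using u by blast
qed

lemma periodic_same_reid_class_imp_lang_map_diff:
  assumes m: "0 < m" and f: "f \<in> periodic m" and f': "f' \<in> periodic m"
    and eq: "reid_class Wreath phi (cut_off m f, z) = reid_class Wreath phi (cut_off m f', z)"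
  shows "f' \<in> (\<lambda>e. f \<otimes>\<^bsub>torus_group m\<^esub> e) ` lang_map (torus_group m) (tau_mod z m) ` periodic m"
proof -
  obtain u where u: "u \<in> carrier Lamps"
    and cut: "cut_off m f' = (\<lambda>x. cut_off m f x \<otimes> lang_map Lamps (tau_phi z) u x)"
    using same_reid_class_imp_lang_map_diff[OF cut_off_closed[OF f] cut_off_closed[OF f'] eq]
    by blast
  have "f' = periodize m (\<lambda>x. cut_off m f x \<otimes> lang_map Lamps (tau_phi z) u x)"
    using periodize_cut_off[OF f' m] cut by simp
  also have "\<dots> = f \<otimes>\<^bsub>torus_group m\<^esub> lang_map (torus_group m) (tau_mod z m) (periodize m u)"
    using group_hom.hom_closed[OF comm_group.lang_map_hom[OF lamp_sum_comm_group tau_phi_hom] u]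
    by (simp only: periodize_mult[OF cut_off_closed[OF f]] periodize_cut_off[OF f m]
        periodize_lang_map[OF m u] mult_torus_group)
  finally show ?thesis
    using periodize_closed[OF u] by blast
qed

lemma card_torus_fixed_points_le:
  assumes m: "0 < m"
  shows "card {f \<in> periodic m. tau_mod z m f = f} \<le> card (reid_classes Wreath phi)"
proof -
  interpret T: comm_group "torus_group m"
    by (rule torus_comm_group)
  let ?E = "lang_map (torus_group m) (tau_mod z m)"
  let ?I = "?E ` periodic m"
  have E: "group_hom (torus_group m) (torus_group m) ?E"
    by (rule T.lang_map_hom[OF tau_mod_hom])
  have fin: "finite (periodic m)"
    by (rule finite_periodic[OF finite_carrier m])
  have count: "card {f \<in> periodic m. tau_mod z m f = f} * card ?I = card (periodic m)"
    using group_hom.card_kernel_mult_card_image[OF E] fin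
    by (simp add: T.kernel_lang_map[OF tau_mod_hom] order_def)
  have "card (periodic m) \<le> card (reid_classes Wreath phi) * card ?I"
  proof (rule card_le_mult_card_if_fibers_covered[OF fin finite_reid_classes _ _
        periodic_same_reid_class_imp_lang_map_diff[OF m]])
    show "reid_class Wreath phi (cut_off m f, z) \<in> reid_classes Wreath phi" if "f \<in> periodic m" for f
      using cut_off_closed[OF that] by (simp add: reid_classes_def carrier_wreath)
  qed (use fin in auto)
  moreover have "0 < card ?I"
    using fin T.one_closed by (auto simp: card_gt_0_iff)
  ultimately show ?thesis
    unfolding count[symmetric] by simp
qed

lemma card_tau_phi_fixed_points_le:
  assumes fin: "finite F" and F: "F \<subseteq> {t \<in> carrier Lamps. tau_phi z t = t}"
  shows "card F \<le> card (reid_classes Wreath phi)"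
proof -
  obtain L where supp_F: "\<And>a. a \<in> F \<Longrightarrow> supp G a \<subseteq> {y. supnorm y \<le> int L}"
    using lamps_supp_bounded[OF fin] F by blast
  let ?m = "2 * L + 1"
  have image: "periodize ?m ` F \<subseteq> {f \<in> periodic ?m. tau_mod z ?m f = f}"
  proof (rule image_subsetI)
    fix a assume "a \<in> F"
    then show "periodize ?m a \<in> {f \<in> periodic ?m. tau_mod z ?m f = f}"
      using F periodize_closed periodize_tau_phi[of ?m a z] by auto
  qed
  have "inj_on (periodize ?m) F"
    using F supp_F by (intro periodize_inj_on_box) auto
  then have "card F = card (periodize ?m ` F)"
    by (simp add: card_image)
  also have "\<dots> \<le> card {f \<in> periodic ?m. tau_mod z ?m f = f}"
    using finite_periodic[OF finite_carrier, of ?m] image by (intro card_mono) simp_all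
  also have "\<dots> \<le> card (reid_classes Wreath phi)"
    by (rule card_torus_fixed_points_le) simp
  finally show ?thesis .
qed

lemma tau_phi_fixed_point_free:
  assumes s: "s \<in> carrier Lamps" and fixed: "tau_phi z s = s"
  shows "s = (\<lambda>x. \<one>)"
proof (rule ccontr)
  assume "s \<noteq> (\<lambda>x. \<one>)"
  then obtain F where "finite F" "card F = Suc (card (reid_classes Wreath phi))"
    "F \<subseteq> {t \<in> carrier Lamps. tau_phi z t = t}"
    using infinite_arbitrarily_large[OF infinite_tau_phi_fixed_points[OF s fixed]] by blast
  then show False
    using card_tau_phi_fixed_points_le[of F z] by simp
qed

lemma lang_map_tau_phi_surjective: "lang_map Lamps (tau_phi z) ` carrier Lamps = carrier Lamps"
proof (rule lang_map_surj_if_inj[OF finite_carrier tau_phi_hom period_pos tau_phi_period])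
  interpret L: comm_group Lamps by (rule lamp_sum_comm_group)
  have "{a \<in> carrier Lamps. tau_phi z a = a} = {\<one>\<^bsub>Lamps\<^esub>}"
  proof (intro equalityI subsetI)
    fix a assume "a \<in> {a \<in> carrier Lamps. tau_phi z a = a}"
    then show "a \<in> {\<one>\<^bsub>Lamps\<^esub>}"
      using tau_phi_fixed_point_free[of a z] by simp
  qed (use group_hom.hom_one[OF tau_phi_hom] L.one_closed in simp)
  then have "kernel Lamps Lamps (lang_map Lamps (tau_phi z)) = {\<one>\<^bsub>Lamps\<^esub>}"
    by (simp only: L.kernel_lang_map[OF tau_phi_hom])
  then show "inj_on (lang_map Lamps (tau_phi z)) (carrier Lamps)"
    using group_hom.inj_iff_trivial_ker[OF L.lang_map_hom[OF tau_phi_hom]] by simp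
qed

lemma lamps_same_reid_class:
  assumes s: "s \<in> carrier Lamps" and s': "s' \<in> carrier Lamps"
  shows "(s', z) \<in> reid_class Wreath phi (s, z)"
proof -
  obtain u where u: "u \<in> carrier Lamps"
    and lang_u: "lang_map Lamps (tau_phi z) u = (\<lambda>x. inv (s x) \<otimes> s' x)"
    using lang_map_tau_phi_surjective lamp_mult_closed[OF lamp_inv_closed[OF s] s']
    by (metis (no_types, lifting) imageE)
  have "(u, 0) \<otimes>\<^bsub>Wreath\<^esub> (s, z) \<otimes>\<^bsub>Wreath\<^esub> phi (inv\<^bsub>Wreath\<^esub> (u, 0)) = (s', z)"
    using twisted_conj_by_lamp[OF u s] lang_u s s' by (simp add: lamp_closed m_assoc[symmetric])
  moreover have "(u, 0) \<in> carrier Wreath"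
    using u by (simp add: carrier_wreath)
  ultimately have "\<exists>v. (s', z) = v \<otimes>\<^bsub>Wreath\<^esub> (s, z) \<otimes>\<^bsub>Wreath\<^esub> phi (inv\<^bsub>Wreath\<^esub> v) \<and> v \<in> carrier Wreath"
    by metis
  then show ?thesis
    unfolding reid_class_def by (simp only: mem_Collect_eq)
qed

lemma reid_class_eq_preimage:
  assumes g: "g \<in> carrier Wreath"
  shows "reid_class Wreath phi g
       = {h \<in> carrier Wreath. proj h \<in> reid_class (Zk :: (int^'n) monoid) phibar (proj g)}"
proof (intro equalityI subsetI CollectI conjI)
  fix h assume "h \<in> reid_class Wreath phi g"
  then show "h \<in> carrier Wreath" "proj h \<in> reid_class Zk phibar (proj g)"
    using Wr.reid_class_subset[OF phi_group_hom g] proj_reid_class[OF g] by blast+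
next
  fix h assume "h \<in> {h \<in> carrier Wreath. proj h \<in> reid_class (Zk :: (int^'n) monoid) phibar (proj g)}"
  then obtain s z where h: "h = (s, z)" and s: "s \<in> carrier Lamps"
    and "z \<in> reid_class (Zk :: (int^'n) monoid) phibar (snd g)"
    by (cases h) (auto simp: carrier_wreath proj_def)
  then obtain w where z: "z = w + snd g + phibar (- w)"
    by (auto simp: reid_class_Zk)
  let ?v = "((\<lambda>x. \<one>), w)"
  let ?g1 = "?v \<otimes>\<^bsub>Wreath\<^esub> g \<otimes>\<^bsub>Wreath\<^esub> phi (inv\<^bsub>Wreath\<^esub> ?v)"
  have g1: "?g1 \<in> reid_class Wreath phi g"
    unfolding reid_class_def using unit_in_wreath[of w] by blast
  obtain s1 where g1_eq: "?g1 = (s1, z)"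
    using snd_twisted_conj[OF unit_in_wreath g] z by (metis prod.collapse snd_conv)
  have "s1 \<in> carrier Lamps"
    using Wr.reid_class_subset[OF phi_group_hom g] g1 g1_eq by (auto simp: carrier_wreath)
  then have "h \<in> reid_class Wreath phi ?g1"
    unfolding h g1_eq using s by (rule lamps_same_reid_class)
  then show "h \<in> reid_class Wreath phi g"
    using Wr.reid_class_trans[OF phi_group_hom g g1] by blast
qed

lemma reid_number_eq_reid_number_induced:
  "reid_number Wreath phi = reid_number (Zk :: (int^'n) monoid) phibar"
proof -
  define preimage where "preimage C = {h \<in> carrier Wreath. proj h \<in> C}" for C
  have proj_surj: "proj ` carrier Wreath = UNIV"
    using unit_in_wreath by (force simp: proj_def)
  have "reid_classes Wreath phi
      = (\<lambda>g. preimage (reid_class (Zk :: (int^'n) monoid) phibar (proj g))) ` carrier Wreath"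
    unfolding reid_classes_def preimage_def using reid_class_eq_preimage by simp
  also have "\<dots> = preimage ` reid_classes (Zk :: (int^'n) monoid) phibar"
    unfolding reid_classes_def carrier_Zk proj_surj[symmetric] image_image ..
  finally have classes: "reid_classes Wreath phi = preimage ` reid_classes (Zk :: (int^'n) monoid) phibar" .
  have "proj ` preimage C = C" for C
    using proj_surj by (auto simp: preimage_def)
  then have "inj_on preimage (reid_classes (Zk :: (int^'n) monoid) phibar)"
    by (metis inj_onI)
  then show ?thesis
    unfolding reid_number_def classes by (simp add: finite_image_iff card_image)
qed

lemma reid_number_tau_phi: "reid_number Lamps (tau_phi z) = 1"
  using comm_group.reid_number_eq_1_if_lang_map_surj[OF lamp_sum_comm_group tau_phi_hom
      lang_map_tau_phi_surjective] .

end

theorem mainTheorem6: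
  fixes G :: "('g, 'b) monoid_scheme"
    and phi :: "(((int ^ 'n::finite) \<Rightarrow> 'g) \<times> (int ^ 'n)) \<Rightarrow> (((int ^ 'n) \<Rightarrow> 'g) \<times> (int ^ 'n))"
  assumes "comm_group G"
    and "finite (carrier G)"
    and "phi \<in> iso (wreath G) (wreath G)"
    and "\<exists>n>0. \<forall>g \<in> carrier (wreath G). (phi ^^ n) g = g"
    and "reid_number (wreath G) phi < \<infinity>"
  shows "(\<forall>g \<in> carrier (wreath G).
            reid_class (wreath G) phi g
              = {h \<in> carrier (wreath G). proj h \<in> reid_class (Zk :: (int ^ 'n) monoid) (induced G phi) (proj g)})
         \<and> reid_number (wreath G) phi = reid_number (Zk :: (int ^ 'n) monoid) (induced G phi)
         \<and> (\<forall>z :: int ^ 'n. reid_number (lamp_sum G :: ((int ^ 'n) \<Rightarrow> 'g) monoid)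
                                 (\<lambda>s. shift z (restr_Sigma phi s)) = 1)"
proof -
  obtain n where "0 < n" "\<forall>g \<in> carrier (wreath G). (phi ^^ n) g = g"
    using assms(4) by blast
  moreover have "finite (reid_classes (wreath G) phi)"
    using assms(5) by (simp add: reid_number_def split: if_splits)
  ultimately interpret wreath_aut_fin G "TYPE('n)" phi n
    using assms by (simp add: wreath_aut_fin_def wreath_aut_fin_axioms_def wreath_aut_def
        wreath_aut_axioms_def lamplighter_def)
  have "(\<lambda>s. shift z (restr_Sigma phi s)) = tau_phi z" for z
    by (simp add: tau_phi_def fun_eq_iff)
  then show ?thesis
    using reid_class_eq_preimage reid_number_eq_reid_number_induced reid_number_tau_phi by simp
qed

end
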